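(* Assume $\lambda_0<\varepsilon-\eta\le0<A-\delta$ and $\rho>(A-\delta)(1-\gamma)$, and let $q\in I$. Let $(X^*,c^* )$ be the closed-loop solution from $q$ for the feedback $\varphi(x)=x_1(0)+\alpha G(x)$. Then $c^*$ is optimal, $V_0(q)=v(q)=\nu G(q)^{1-\gamma}=J_0(q;c^* )$, and $c^*$ is the unique (up to a.e. equality) optimal control from $q$.
   Context: Parameters $A,\delta,\rho,\varepsilon,\eta,\tau>0$, $\gamma>0$, $\gamma\ne1$; $\lambda_0$ is the unique real root of $1=\varepsilon\int_{-\tau}^0e^{(\lambda+\eta)u}du$. $M^2=\mathbb{R}\times L^2([-\tau,0];\mathbb{R})$, $\langle x,y\rangle=x_0y_0+\int_{-\tau}^0x_1y_1$. $\kappa=\big(1-\varepsilon\int_{-\tau}^0e^{(A-\delta+\eta)s}ds,\ s\mapsto -e^{(A-\delta)s}\big)$, $G(x)=\langle x,\kappa\rangle$, $\mathcal X=\{G>0\}$, $\alpha=\frac{\rho-(A-\delta)(1-\gamma)}{\gamma}$, $\nu=\frac1{1-\gamma}\alpha^{-\gamma}$. For $q=(x_0,x_1)\in M^2$ and a control $c\in L^1_{loc}([0,\infty);\mathbb{R})$ the state is $X_0(t)=e^{(A-\delta)t}x_0-\int_0^te^{(A-\delta)(t-u)}c(u)du$, $X_1(t)[s]=x_1(s-t)\mathbf 1_{\{s-t\ge-\tau\}}+\varepsilon\int_{\max(0,t-s-\tau)}^{t}c(u)e^{\eta(u-t+s)}du$, $s\in[-\tau,0]$. Admissible controls: $\mathcal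 C_{ad}(q)=\{c: X_0(t)\ge0,\ c(t)\ge0,\ c(t)\ge X_1(t)[0]\ \forall t\}$. Objective $J_0(q;c)=\int_0^\infty\frac{(c(t)-X_1(t)[0])^{1-\gamma}}{1-\gamma}e^{-\rho t}dt$ (integrand $-\infty$ where $c=X_1[0]$ and $\gamma>1$), value $V_0(q)=\sup_{c\in\mathcal C_{ad}(q)}J_0(q;c)$ ($-\infty$ if empty). A closed-loop solution for $\varphi(x)=x_1(0)+\alpha G(x)$ is a pair $(X,c)$ with $c(t)=X_1(t)[0]+\alpha G(X(t))$ a.e. $I=\{x\in\mathcal X: x_1\in W^{1,2}([-\tau,0]),\ x_1(-\tau)=0,\ x_1(s)>0\ \forall s\in(-\tau,0]\}$. *)

theory Defs
  imports "HOL-Analysis.Analysis"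
begin

text \<open>Elements of M^2 = R x L^2([-tau,0]) are represented as pairs (x0, x1) with
  x1 :: real => real (only its values on [-tau,0] matter).\<close>

definition lambda0 :: "real \<Rightarrow> real \<Rightarrow> real \<Rightarrow> real" where
  "lambda0 eps eta tau =
     (THE l. 1 = eps * (LINT u:{-tau..0}|lborel. exp ((l + eta) * u)))"

definition kappa0 :: "real \<Rightarrow> real \<Rightarrow> real \<Rightarrow> real \<Rightarrow> real \<Rightarrow> real" where
  "kappa0 A delta eps eta tau = 1 - eps * (LINT s:{-tau..0}|lborel. exp ((A - delta + eta) * s))"

definition kappa1 :: "real \<Rightarrow> real \<Rightarrow> real \<Rightarrow> real" where
  "kappa1 A delta s = - exp ((A - delta) * s)"

definition Gfun :: "real \<Rightarrow> real \<Rightarrow> real \<Rightarrow> real \<Rightarrow> real \<Rightarrow> real \<times> (real \<Rightarrow> real) \<Rightarrow> real" where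
  "Gfun A delta eps eta tau x =
     fst x * kappa0 A delta eps eta tau + (LINT s:{-tau..0}|lborel. snd x s * kappa1 A delta s)"

definition alpha :: "real \<Rightarrow> real \<Rightarrow> real \<Rightarrow> real \<Rightarrow> real" where
  "alpha A delta rho gam = (rho - (A - delta) * (1 - gam)) / gam"

definition nu :: "real \<Rightarrow> real \<Rightarrow> real \<Rightarrow> real \<Rightarrow> real" where
  "nu A delta rho gam = 1 / (1 - gam) * (alpha A delta rho gam) powr (- gam)"

definition stX0 :: "real \<Rightarrow> real \<Rightarrow> real \<Rightarrow> (real \<Rightarrow> real) \<Rightarrow> real \<Rightarrow> real" where
  "stX0 A delta x0 c t =
     exp ((A - delta) * t) * x0 - (LINT u:{0..t}|lborel. exp ((A - delta) * (t - u)) * c u)"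

definition stX1 :: "real \<Rightarrow> real \<Rightarrow> real \<Rightarrow> (real \<Rightarrow> real) \<Rightarrow> (real \<Rightarrow> real) \<Rightarrow> real \<Rightarrow> real \<Rightarrow> real" where
  "stX1 eps eta tau x1 c t = (\<lambda>s.
     (if s - t \<ge> - tau then x1 (s - t) else 0)
     + eps * (LINT u:{max 0 (t - s - tau)..t}|lborel. c u * exp (eta * (u - t + s))))"

definition state :: "real \<Rightarrow> real \<Rightarrow> real \<Rightarrow> real \<Rightarrow> real \<Rightarrow> real \<times> (real \<Rightarrow> real)
    \<Rightarrow> (real \<Rightarrow> real) \<Rightarrow> real \<Rightarrow> real \<times> (real \<Rightarrow> real)" where
  "state A delta eps eta tau q c t = (stX0 A delta (fst q) c t, stX1 eps eta tau (snd q) c t)"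

definition L1loc :: "(real \<Rightarrow> real) \<Rightarrow> bool" where
  "L1loc c \<longleftrightarrow> (\<forall>T\<ge>0. set_integrable lborel {0..T} c)"

text \<open>Admissible controls (constraints on c understood a.e., as c is an L^1_loc class).\<close>
definition Cad :: "real \<Rightarrow> real \<Rightarrow> real \<Rightarrow> real \<Rightarrow> real \<Rightarrow> real \<times> (real \<Rightarrow> real)
    \<Rightarrow> (real \<Rightarrow> real) set" where
  "Cad A delta eps eta tau q = {c. L1loc c
     \<and> (\<forall>t\<ge>0. stX0 A delta (fst q) c t \<ge> 0)
     \<and> (AE t in lborel. t \<ge> 0 \<longrightarrow> c t \<ge> 0 \<and> c t \<ge> stX1 eps eta tau (snd q) c t 0)}"

text \<open>Objective: for gam < 1 the integrand is nonnegative, for gam > 1 nonpositive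
  (equal to -infinity where c = X1[0]); the integral is taken in the extended reals.\<close>
definition J0 :: "real \<Rightarrow> real \<Rightarrow> real \<Rightarrow> real \<Rightarrow> real \<Rightarrow> real \<Rightarrow> real \<Rightarrow> real \<times> (real \<Rightarrow> real)
    \<Rightarrow> (real \<Rightarrow> real) \<Rightarrow> ereal" where
  "J0 A delta rho eps eta tau gam q c =
     (let d = (\<lambda>t. max 0 (c t - stX1 eps eta tau (snd q) c t 0)) in
      if gam < 1 then
        enn2ereal (\<integral>\<^sup>+ t. indicator {0..} t *
           ennreal (d t powr (1 - gam) / (1 - gam) * exp (- rho * t)) \<partial>lborel)
      else
        - enn2ereal (\<integral>\<^sup>+ t. indicator {0..} t *
           (if d t = 0 then \<infinity> else ennreal (d t powr (1 - gam) / (gam - 1) * exp (- rho * t))) \<partial>lborel))"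

definition V0 :: "real \<Rightarrow> real \<Rightarrow> real \<Rightarrow> real \<Rightarrow> real \<Rightarrow> real \<Rightarrow> real \<Rightarrow> real \<times> (real \<Rightarrow> real) \<Rightarrow> ereal" where
  "V0 A delta rho eps eta tau gam q =
     Sup (J0 A delta rho eps eta tau gam q ` Cad A delta eps eta tau q)"

definition W12 :: "real \<Rightarrow> (real \<Rightarrow> real) \<Rightarrow> bool" where
  "W12 tau x1 \<longleftrightarrow> (\<exists>g. g \<in> borel_measurable lborel
     \<and> set_integrable lborel {-tau..0} g
     \<and> set_integrable lborel {-tau..0} (\<lambda>s. (g s)\<^sup>2)
     \<and> (\<forall>s\<in>{-tau..0}. x1 s = x1 (-tau) + (LINT u:{-tau..s}|lborel. g u)))"

definition Iset :: "real \<Rightarrow> real \<Rightarrow> real \<Rightarrow> real \<Rightarrow> real \<Rightarrow> (real \<times> (real \<Rightarrow> real)) set" where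
  "Iset A delta eps eta tau = {x. Gfun A delta eps eta tau x > 0 \<and> W12 tau (snd x)
     \<and> snd x (-tau) = 0 \<and> (\<forall>s\<in>{-tau<..0}. snd x s > 0)}"

definition closed_loop :: "real \<Rightarrow> real \<Rightarrow> real \<Rightarrow> real \<Rightarrow> real \<Rightarrow> real \<Rightarrow> real \<Rightarrow> real \<times> (real \<Rightarrow> real)
    \<Rightarrow> (real \<Rightarrow> real \<times> (real \<Rightarrow> real)) \<Rightarrow> (real \<Rightarrow> real) \<Rightarrow> bool" where
  "closed_loop A delta rho eps eta tau gam q X c \<longleftrightarrow> L1loc c
     \<and> (\<forall>t\<ge>0. X t = state A delta eps eta tau q c t)
     \<and> (AE t in lborel. t \<ge> 0 \<longrightarrow>
          c t = snd (X t) 0 + alpha A delta rho gam * Gfun A delta eps eta tau (X t))"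

end

theory Submission
  imports Defs
begin

(*
  Along any control, e^(-r t) G(X(t)) = G(q) - \<integral>\<^sub>0\<^sup>t e^(-r u) (c(u) - X1(u)[0]) du with r = A - delta,
  so G behaves like a wealth from which the gap c - X1[0] above the habit level X1[0] is consumed.
  For an admissible control X0 \<ge> 0 and X1 \<ge> 0, hence G(X(t)) is bounded below by minus a window
  integral of c; this gives the budget constraint \<integral>\<^sub>0\<^sup>\<infinity> e^(-r t) (c - X1[0])\<^sup>+ dt \<le> G(q).
  The tangent inequality for the concave utility at the gap alpha G(q) e^((r - alpha) t), whose
  marginal utility is proportional to e^((rho - r) t), then bounds J0 by nu G(q)^(1 - gam), with
  equality only if the gap of the control is this one almost everywhere.
  The closed loop turns the equation for G(X(t)) into a linear Volterra equation, so it realises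
  exactly this gap, and it is admissible (its negative part vanishes by Gronwall).
  Finally the gap determines the control, again by Gronwall, because X1[0] depends on c through a
  delay integral with weights at most eps.
*)

section \<open>Integration and Gronwall lemmas\<close>

lemma integral_kernel_swap:
  fixes f :: "real \<Rightarrow> real" and k :: "real \<Rightarrow> real \<Rightarrow> real"
  assumes f: "integrable lborel f"
    and km: "(\<lambda>p. k (fst p) (snd p)) \<in> borel_measurable (lborel \<Otimes>\<^sub>M lborel)"
    and bd: "\<And>x y. \<bar>k x y\<bar> \<le> B * indicator {a0..b0} x"
  shows "(\<integral>x. (\<integral>y. f y * k x y \<partial>lborel) \<partial>lborel) = (\<integral>y. f y * (\<integral>x. k x y \<partial>lborel) \<partial>lborel)"
    and "integrable lborel (\<lambda>x. \<integral>y. f y * k x y \<partial>lborel)"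
    and "integrable lborel (\<lambda>y. f y * (\<integral>x. k x y \<partial>lborel))"
proof -
  have fm[measurable]: "f \<in> borel_measurable lborel" using f by auto
  have km'[measurable]: "(\<lambda>p. k (fst p) (snd p)) \<in> borel_measurable (lborel \<Otimes>\<^sub>M lborel)" by (rule km)
  have kx[measurable]: "k x \<in> borel_measurable lborel" for x
    using measurable_compose[OF measurable_Pair1'[of x lborel lborel] km] by simp
  have ky[measurable]: "(\<lambda>x. k x y) \<in> borel_measurable lborel" for y
    using measurable_compose[OF measurable_Pair2'[of y lborel lborel] km] by simp
  have B0: "B \<ge> 0 \<or> {a0..b0} = {}" using bd[of a0 0] by (cases "a0 \<le> b0") (auto simp: indicator_def)
  have Fm[measurable]: "(\<lambda>p. f (snd p) * k (fst p) (snd p)) \<in> borel_measurable (lborel \<Otimes>\<^sub>M lborel)"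
    by measurable
  have int2: "integrable lborel (\<lambda>y. f y * k x y)" for x
  proof (rule Bochner_Integration.integrable_bound[where f="\<lambda>y. \<bar>B\<bar> * \<bar>f y\<bar>"])
    show "integrable lborel (\<lambda>y. \<bar>B\<bar> * \<bar>f y\<bar>)" using f by auto
    show "AE y in lborel. norm (f y * k x y) \<le> norm (\<bar>B\<bar> * \<bar>f y\<bar>)"
    proof
      fix y have "\<bar>k x y\<bar> \<le> \<bar>B\<bar>" using bd[of x y] by (cases "a0 \<le> x \<and> x \<le> b0") (auto simp: indicator_def)
      then show "norm (f y * k x y) \<le> norm (\<bar>B\<bar> * \<bar>f y\<bar>)"
        by (simp add: abs_mult) (metis abs_ge_zero mult.commute mult_left_mono)
    qed
  qed simp
  have I: "integrable (lborel \<Otimes>\<^sub>M lborel) (\<lambda>p. f (snd p) * k (fst p) (snd p))"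
  proof (rule lborel_pair.Fubini_integrable)
    show "integrable lborel (\<lambda>x. \<integral>y. norm (f (snd (x, y)) * k (fst (x, y)) (snd (x, y))) \<partial>lborel)"
    proof (rule Bochner_Integration.integrable_bound[where f="\<lambda>x. B * (\<integral>y. \<bar>f y\<bar> \<partial>lborel) * indicator {a0..b0} x"])
      show "integrable lborel (\<lambda>x. B * (\<integral>y. \<bar>f y\<bar> \<partial>lborel) * indicator {a0..b0} x)"
        by (auto intro!: integrable_real_indicator simp: emeasure_lborel_Icc_eq)
      show "(\<lambda>x. \<integral>y. norm (f (snd (x, y)) * k (fst (x, y)) (snd (x, y))) \<partial>lborel) \<in> borel_measurable lborel"
        by measurable
      show "AE x in lborel. norm (\<integral>y. norm (f (snd (x, y)) * k (fst (x, y)) (snd (x, y))) \<partial>lborel)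
          \<le> norm (B * (\<integral>y. \<bar>f y\<bar> \<partial>lborel) * indicator {a0..b0} x)"
      proof
        fix x
        have "(\<integral>y. norm (f y * k x y) \<partial>lborel) \<le> (\<integral>y. \<bar>f y\<bar> * (B * indicator {a0..b0} x) \<partial>lborel)"
          apply (rule integral_mono)
          using int2[of x] f apply auto[2]
          by (simp add: abs_mult bd mult_left_mono)
        also have "\<dots> = B * (\<integral>y. \<bar>f y\<bar> \<partial>lborel) * indicator {a0..b0} x" by simp
        finally show "norm (\<integral>y. norm (f (snd (x, y)) * k (fst (x, y)) (snd (x, y))) \<partial>lborel)
          \<le> norm (B * (\<integral>y. \<bar>f y\<bar> \<partial>lborel) * indicator {a0..b0} x)"
          by (simp add: integral_nonneg_AE)
      qed
    qed
    show "AE x in lborel. integrable lborel (\<lambda>y. f (snd (x, y)) * k (fst (x, y)) (snd (x, y)))"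
      using int2 by simp
  qed (rule Fm)
  have "(\<integral>y. (\<integral>x. f y * k x y \<partial>lborel) \<partial>lborel) = (\<integral>x. (\<integral>y. f y * k x y \<partial>lborel) \<partial>lborel)"
    using lborel_pair.Fubini_integral[of "\<lambda>x y. f y * k x y"] I by (simp add: case_prod_beta')
  then show "(\<integral>x. (\<integral>y. f y * k x y \<partial>lborel) \<partial>lborel) = (\<integral>y. f y * (\<integral>x. k x y \<partial>lborel) \<partial>lborel)" by simp
  show "integrable lborel (\<lambda>x. \<integral>y. f y * k x y \<partial>lborel)"
    using lborel_pair.integrable_fst'[OF I] by simp
  show "integrable lborel (\<lambda>y. f y * (\<integral>x. k x y \<partial>lborel))"
    using lborel_pair.integrable_snd[of "\<lambda>x y. f y * k x y"] I by (simp add: case_prod_beta')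
qed

lemma integral_indicator_exp_affine:
  fixes a b k m :: real assumes ab: "a \<le> b" and k: "k \<noteq> 0"
  shows "(\<integral>x. indicator {a..b} x * exp (k*x + m) \<partial>lborel) = exp m * (exp(k*b) - exp(k*a))/k"
proof -
  have "(\<integral>x. indicator {a..b} x *\<^sub>R exp (k*x + m) \<partial>lborel) = exp(k*b+m)/k - exp(k*a+m)/k"
    by (rule integral_FTC_atLeastAtMost[OF ab])
       (auto intro!: derivative_eq_intros continuous_intros simp: has_real_derivative_iff_has_vector_derivative[symmetric] k)
  then show ?thesis by (simp add: exp_add field_simps) (simp add: diff_divide_distrib eq_diff_eq)
qed

lemma set_integrable_continuous_mult:
  fixes c g :: "real \<Rightarrow> real"
  assumes ci: "set_integrable lborel {a..b} c" and gc: "continuous_on {a..b} g"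
  shows "set_integrable lborel {a..b} (\<lambda>u. g u * c u)"
proof -
  have "bounded (g ` {a..b})"
    using compact_imp_bounded[OF compact_continuous_image[OF gc compact_Icc]] .
  then obtain M where "\<forall>y\<in>g ` {a..b}. norm y \<le> M" by (auto simp: bounded_iff)
  then have M: "\<And>x. x \<in> {a..b} \<Longrightarrow> norm (g x) \<le> M" by auto
  have cm: "(\<lambda>x. indicator {a..b} x * c x) \<in> borel_measurable lborel"
    using ci by (auto simp: set_integrable_def)
  have gm: "(\<lambda>x. indicator {a..b} x * g x) \<in> borel_measurable lborel"
    using borel_measurable_continuous_on_indicator[OF _ gc] by simp
  have eq: "(\<lambda>x. indicator {a..b} x * (g x * c x)) = (\<lambda>x. (indicator {a..b} x * g x) * (indicator {a..b} x * c x))"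
    by (auto simp: indicator_def)
  show ?thesis
    unfolding set_integrable_def real_scaleR_def
  proof (rule Bochner_Integration.integrable_bound[where f="\<lambda>x. M * \<bar>indicator {a..b} x * c x\<bar>"])
    show "integrable lborel (\<lambda>x. M * \<bar>indicator {a..b} x * c x\<bar>)"
      using ci by (auto simp: set_integrable_def)
    show "(\<lambda>x. indicator {a..b} x * (g x * c x)) \<in> borel_measurable lborel"
      unfolding eq using gm cm by measurable
    show "AE x in lborel. norm (indicator {a..b} x * (g x * c x)) \<le> norm (M * \<bar>indicator {a..b} x * c x\<bar>)"
    proof
      fix x show "norm (indicator {a..b} x * (g x * c x)) \<le> norm (M * \<bar>indicator {a..b} x * c x\<bar>)"
      proof (cases "x \<in> {a..b}")
        case True
        then have "\<bar>g x\<bar> \<le> M" using M by simp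
        then show ?thesis using True by (simp add: abs_mult mult_right_mono)
      qed simp
    qed
  qed
qed

lemma gronwall_integral_zero:
  fixes f :: "real \<Rightarrow> real" and K :: real
  assumes fi: "\<And>T. T \<ge> 0 \<Longrightarrow> set_integrable lborel {0..T} f"
    and ae: "AE t in lborel. t \<ge> 0 \<longrightarrow> 0 \<le> f t \<and> f t \<le> K * (LINT u:{0..t}|lborel. f u)"
    and K: "K \<ge> 0" and t: "t \<ge> 0"
  shows "(LINT u:{0..t}|lborel. f u) = 0"
proof -
  define F where "F t = (LINT u:{0..t}|lborel. f u)" for t
  have fi': "integrable lborel (\<lambda>u. indicator {0..T} u * f u)" if "T \<ge> 0" for T
    using fi[OF that] by (simp add: set_integrable_def)
  have Fmono: "F s \<le> F t" if "0 \<le> s" "s \<le> t" for s t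
    unfolding F_def set_lebesgue_integral_def real_scaleR_def
  proof (rule integral_mono_AE[OF fi' fi'])
    show "AE x in lborel. indicator {0..s} x * f x \<le> indicator {0..t} x * f x"
      using ae by eventually_elim (use that in \<open>auto simp: indicator_def\<close>)
  qed (use that in auto)
  have F0: "F t \<ge> 0" if "0 \<le> t" for t
    unfolding F_def set_lebesgue_integral_def real_scaleR_def
    by (rule integral_nonneg_AE) (use ae in \<open>eventually_elim, auto simp: indicator_def\<close>)
  define d where "d = 1 / (2 * (K + 1))"
  have d: "d > 0" "K * d \<le> 1/2" using K by (auto simp: d_def field_simps)
  \<comment> \<open>On a step of length d, F t \<le> K d F t \<le> F t / 2, so F vanishes on [0, n d] for every n.\<close>
  have "\<forall>u. 0 \<le> u \<and> u < real n * d \<longrightarrow> F u = 0" for n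
  proof (induction n)
    case (Suc n)
    show ?case
    proof (intro allI impI)
      fix t assume t: "0 \<le> t \<and> t < real (Suc n) * d"
      show "F t = 0"
      proof (cases "t < real n * d")
        case False
        define s0 where "s0 = real n * d"
        have s0: "0 \<le> s0" "s0 \<le> t" "t - s0 \<le> d" using False t d by (auto simp: s0_def algebra_simps)
        define Ft where "Ft = F t"
        have Ft: "F t = (\<integral>u. indicator {0..t} u * f u \<partial>lborel)"
          by (simp add: F_def set_lebesgue_integral_def)
        have "F t \<le> (\<integral>u. indicator {0..t} u * (K * Ft * indicator {s0..t} u) \<partial>lborel)"
          unfolding Ft
        proof (rule integral_mono_AE[OF fi'])
          have "integrable lborel (\<lambda>u. (K * Ft) * indicator {s0..t} u)"
            by (intro integrable_mult_right integrable_real_indicator) (auto simp: emeasure_lborel_Icc_eq)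
          also have "(\<lambda>u. (K * Ft) * indicator {s0..t} u) = (\<lambda>u. indicator {0..t} u * (K * Ft * indicator {s0..t} u))"
            using s0 by (auto simp: indicator_def fun_eq_iff)
          finally show "integrable lborel (\<lambda>u. indicator {0..t} u * (K * Ft * indicator {s0..t} u))" .
          show "AE u in lborel. indicator {0..t} u * f u \<le> indicator {0..t} u * (K * Ft * indicator {s0..t} u)"
            using ae
          proof eventually_elim
            case (elim u)
            show ?case
            proof (cases "0 \<le> u \<and> u \<le> t")
              case True
              show ?thesis
              proof (cases "u < s0")
                case True2: True
                have "F u = 0" using Suc True True2 by (auto simp: s0_def)
                then show ?thesis using elim True True2 by (auto simp: F_def Ft_def indicator_def)
              next
                case False2: False
                have "K * F u \<le> K * F t" using Fmono[of u t] True K by (auto intro: mult_left_mono)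
                then show ?thesis using elim True False2 by (auto simp: F_def Ft_def indicator_def)
              qed
            qed (auto simp: indicator_def)
          qed
        qed (use t in auto)
        also have "\<dots> = (\<integral>u. K * F t * indicator {s0..t} u \<partial>lborel)"
          unfolding Ft_def by (rule Bochner_Integration.integral_cong) (use s0 in \<open>auto simp: indicator_def\<close>)
        also have "\<dots> = K * F t * (t - s0)" using s0 by simp
        also have "\<dots> \<le> K * F t * d"
          using s0 K F0[of t] t by (intro mult_left_mono) auto
        also have "\<dots> \<le> F t / 2" using d F0[of t] t
          by (metis mult.commute mult.left_commute mult_left_mono times_divide_eq_right mult.right_neutral)
        finally show ?thesis using F0[of t] t by simp
      qed (use Suc t in auto)
    qed
  qed simp
  moreover obtain n where "t / d < real n" using reals_Archimedean2 by blast
  then have "t < real n * d" using d by (simp add: field_simps)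
  ultimately show ?thesis using t by (auto simp: F_def)
qed

lemma gronwall_AE_zero:
  fixes f :: "real \<Rightarrow> real" and K :: real
  assumes fi: "\<And>T. T \<ge> 0 \<Longrightarrow> set_integrable lborel {0..T} f"
    and ae: "AE t in lborel. t \<ge> 0 \<longrightarrow> 0 \<le> f t \<and> f t \<le> K * (LINT u:{0..t}|lborel. f u)"
    and K: "K \<ge> 0"
  shows "AE t in lborel. t \<ge> 0 \<longrightarrow> f t = 0"
proof -
  have AEn: "AE u in lborel. indicator {0..real n} u * f u = 0" for n
  proof -
    have "integral\<^sup>L lborel (\<lambda>u. indicator {0..real n} u * f u) = 0"
      using gronwall_integral_zero[OF fi ae K, of "real n"] by (simp add: set_lebesgue_integral_def)
    moreover have "AE u in lborel. 0 \<le> indicator {0..real n} u * f u"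
      using ae by eventually_elim (auto simp: indicator_def)
    ultimately show ?thesis
      using integral_nonneg_eq_0_iff_AE[of lborel "\<lambda>u. indicator {0..real n} u * f u"] fi[of "real n"]
      by (simp add: set_integrable_def)
  qed
  have "AE u in lborel. \<forall>n. indicator {0..real n} u * f u = 0"
    by (rule AE_all_countable[THEN iffD2]) (use AEn in blast)
  then show ?thesis
  proof eventually_elim
    case (elim u)
    show ?case
    proof
      assume u: "u \<ge> 0"
      obtain n where "u < real n" using reals_Archimedean2 by blast
      then show "f u = 0" using elim[rule_format, of n] u by (auto simp: indicator_def split: if_splits)
    qed
  qed
qed

lemma borel_measurable_indicator_atLeast_of_Icc:
  fixes f :: "real \<Rightarrow> real"
  assumes "\<And>n::nat. (\<lambda>x. indicator {0..real n} x * f x) \<in> borel_measurable lborel"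
  shows "(\<lambda>x. indicator {0..} x * f x) \<in> borel_measurable lborel"
proof (rule borel_measurable_LIMSEQ_real[where u="\<lambda>n x. indicator {0..real n} x * f x"])
  fix x :: real
  obtain N where N: "x < real N" using reals_Archimedean2 by blast
  have "eventually (\<lambda>n. indicator {0..real n} x * f x = indicator {0..} x * f x) sequentially"
    unfolding eventually_sequentially
  proof (intro exI allI impI)
    fix n assume "N \<le> n"
    then have "x \<le> real n" using N by (meson less_le_not_le of_nat_le_iff order.trans)
    then show "indicator {0..real n} x * f x = indicator {0..} x * f x" by (auto simp: indicator_def)
  qed
  then show "(\<lambda>n. indicator {0..real n} x * f x) \<longlonglongrightarrow> indicator {0..} x * f x"
    by (rule tendsto_eventually)
qed (rule assms)

lemma borel_measurable_indicator_indef_integral: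
  fixes f :: "real \<Rightarrow> real"
  assumes fi: "set_integrable lborel {0..T} f"
  shows "(\<lambda>t. indicator {0..T} t * (LINT u:{0..t}|lborel. f u)) \<in> borel_measurable lborel"
proof -
  define fT where "fT = (\<lambda>u. indicator {0..T} u * f u)"
  have fTm[measurable]: "fT \<in> borel_measurable lborel" using fi by (auto simp: fT_def set_integrable_def)
  have km: "(\<lambda>p. (if 0 \<le> snd p \<and> snd p \<le> fst p then 1 else 0) * fT (snd p)) \<in> borel_measurable (lborel \<Otimes>\<^sub>M lborel)"
    by measurable
  have m: "(\<lambda>t. \<integral>u. (if 0 \<le> u \<and> u \<le> t then 1 else 0) * fT u \<partial>lborel) \<in> borel_measurable lborel"
    using lborel.borel_measurable_lebesgue_integral[of "\<lambda>t u. (if 0 \<le> u \<and> u \<le> t then 1 else 0) * fT u" lborel] km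
    by (simp add: case_prod_beta')
  have eq: "indicator {0..T} t * (LINT u:{0..t}|lborel. f u)
      = indicator {0..T} t * (\<integral>u. (if 0 \<le> u \<and> u \<le> t then 1 else 0) * fT u \<partial>lborel)" for t
  proof (cases "t \<in> {0..T}")
    case True
    have "(LINT u:{0..t}|lborel. f u) = (\<integral>u. (if 0 \<le> u \<and> u \<le> t then 1 else 0) * fT u \<partial>lborel)"
      unfolding set_lebesgue_integral_def
      by (rule Bochner_Integration.integral_cong) (use True in \<open>auto simp: fT_def indicator_def\<close>)
    then show ?thesis by simp
  qed simp
  show ?thesis unfolding eq using m by measurable
qed

lemma set_integrable_const_minus_indef_integral:
  fixes g :: "real \<Rightarrow> real"
  assumes gi: "set_integrable lborel {0..T} g" and T: "0 \<le> T"
  shows "set_integrable lborel {0..T} (\<lambda>t. C - (LINT u:{0..t}|lborel. g u))"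
proof -
  have gi': "integrable lborel (\<lambda>u. indicator {0..T} u * g u)" using gi by (simp add: set_integrable_def)
  define M where "M = \<bar>C\<bar> + (\<integral>u. \<bar>indicator {0..T} u * g u\<bar> \<partial>lborel)"
  show ?thesis unfolding set_integrable_def real_scaleR_def
  proof (rule Bochner_Integration.integrable_bound[where f="\<lambda>t. M * indicator {0..T} t"])
    show "integrable lborel (\<lambda>t. M * indicator {0..T} t)"
      by (intro integrable_mult_right integrable_real_indicator) (auto simp: emeasure_lborel_Icc_eq)
    have "(\<lambda>t. indicator {0..T} t * C - indicator {0..T} t * (LINT u:{0..t}|lborel. g u)) \<in> borel_measurable lborel"
      using borel_measurable_indicator_indef_integral[OF gi] by measurable
    then show "(\<lambda>t. indicator {0..T} t * (C - (LINT u:{0..t}|lborel. g u))) \<in> borel_measurable lborel"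
      by (simp add: algebra_simps)
    show "AE t in lborel. norm (indicator {0..T} t * (C - (LINT u:{0..t}|lborel. g u))) \<le> norm (M * indicator {0..T} t)"
    proof (rule AE_I2)
      fix t
      show "norm (indicator {0..T} t * (C - (LINT u:{0..t}|lborel. g u))) \<le> norm (M * indicator {0..T} t)"
      proof (cases "t \<in> {0..T}")
        case True
        have "\<bar>LINT u:{0..t}|lborel. g u\<bar> = \<bar>\<integral>u. indicator {0..t} u * (indicator {0..T} u * g u) \<partial>lborel\<bar>"
          unfolding set_lebesgue_integral_def
          by (rule arg_cong[where f=abs], rule Bochner_Integration.integral_cong) (use True in \<open>auto simp: indicator_def\<close>)
        also have "\<dots> \<le> (\<integral>u. \<bar>indicator {0..T} u * g u\<bar> \<partial>lborel)"
        proof (rule integral_abs_bound_integral)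
          show "integrable lborel (\<lambda>u. indicator {0..t} u * (indicator {0..T} u * g u))"
            using integrable_real_mult_indicator[OF _ gi', of "{0..t}"] by (simp add: mult.commute)
          show "integrable lborel (\<lambda>u. \<bar>indicator {0..T} u * g u\<bar>)" using integrable_abs[OF gi'] .
        qed (auto simp: indicator_def abs_mult)
        finally have "\<bar>LINT u:{0..t}|lborel. g u\<bar> \<le> (\<integral>u. \<bar>indicator {0..T} u * g u\<bar> \<partial>lborel)" .
        then show ?thesis using True by (simp add: M_def)
      next
        case False then show ?thesis by simp
      qed
    qed
  qed
qed

lemma powr_div_below_tangent_at_1:
  fixes p t :: real
  assumes p: "p < 1" "p \<noteq> 0" and t: "t > 0" "t \<noteq> 1"
  shows "t powr p / p - 1 / p - (t - 1) < 0"
proof -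
  define phi where "phi = (\<lambda>t::real. t powr p / p - 1 / p - (t - 1))"
  have der: "DERIV phi x :> x powr (p - 1) - 1" if "x > 0" for x
    unfolding phi_def using that p
    by (auto intro!: derivative_eq_intros simp: field_simps powr_diff)
  have phi1: "phi 1 = 0" by (simp add: phi_def)
  show ?thesis
  proof (cases "t > 1")
    case True
    obtain z where z: "1 < z" "z < t" "phi t - phi 1 = (t - 1) * (z powr (p - 1) - 1)"
      using MVT2[OF True, of phi "\<lambda>x. x powr (p - 1) - 1"] der by force
    have "z powr (p - 1) < 1 powr (p - 1)" using z p by (intro powr_less_mono2_neg) auto
    then have "(t - 1) * (z powr (p - 1) - 1) < 0" using True by (simp add: mult_pos_neg)
    then show ?thesis using z phi1 by (simp add: phi_def)
  next
    case False
    then have tl: "t < 1" using t by simp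
    obtain z where z: "t < z" "z < 1" "phi 1 - phi t = (1 - t) * (z powr (p - 1) - 1)"
      using MVT2[OF tl, of phi "\<lambda>x. x powr (p - 1) - 1"] der t by force
    have "1 powr (p - 1) < z powr (p - 1)" using z p t by (intro powr_less_mono2_neg) auto
    then have "0 < (1 - t) * (z powr (p - 1) - 1)" using tl by simp
    then show ?thesis using z phi1 by (simp add: phi_def)
  qed
qed

lemma powr_div_below_tangent_strict:
  fixes p x y :: real
  assumes p: "p < 1" "p \<noteq> 0" and y: "y > 0" and x: "x > 0 \<or> (x = 0 \<and> p > 0)" and xy: "x \<noteq> y"
  shows "x powr p / p < y powr p / p + y powr (p - 1) * (x - y)"
proof (cases "x = 0")
  case True
  then have pp: "p > 0" using x by simp
  have "y powr (p - 1) * y = y powr p" using y by (simp add: powr_diff)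
  moreover have "y powr p * (1/p - 1) > 0" using y pp p by (simp add: field_simps)
  ultimately show ?thesis using True pp by (simp add: field_simps)
next
  case False
  then have x0: "x > 0" using x by simp
  define t where "t = x / y"
  have t: "t > 0" "t \<noteq> 1" using x0 y xy by (auto simp: t_def)
  have xt: "x = y * t" using y by (simp add: t_def)
  have "t powr p / p - 1 / p - (t - 1) < 0" by (rule powr_div_below_tangent_at_1[OF p t])
  then have "y powr p * (t powr p / p - 1 / p - (t - 1)) < 0"
    using y by (simp add: mult_pos_neg)
  moreover have "y powr (p - 1) * y = y powr p" using y by (simp add: powr_diff)
  ultimately show ?thesis unfolding xt using y t
    by (simp add: powr_mult field_simps)
qed

lemma powr_div_below_tangent:
  fixes p x y :: real
  assumes p: "p < 1" "p \<noteq> 0" and y: "y > 0" and x: "x > 0 \<or> (x = 0 \<and> p > 0)"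
  shows "x powr p / p \<le> y powr p / p + y powr (p - 1) * (x - y)"
  using powr_div_below_tangent_strict[OF p y x] by (cases "x = y") auto

lemma AE_eq_of_nn_integral_ge:
  fixes F G :: "real \<Rightarrow> ennreal"
  assumes Fm: "F \<in> borel_measurable lborel" and Gm: "G \<in> borel_measurable lborel"
    and le: "\<And>x. F x \<le> G x" and int: "integral\<^sup>N lborel G \<le> integral\<^sup>N lborel F"
    and fin: "integral\<^sup>N lborel F \<noteq> \<infinity>"
  shows "AE x in lborel. F x = G x"
proof -
  have "(\<integral>\<^sup>+x. G x - F x \<partial>lborel) = integral\<^sup>N lborel G - integral\<^sup>N lborel F"
    by (rule nn_integral_diff[OF Gm Fm fin]) (simp add: le)
  also have "\<dots> = 0" using int fin by (simp add: diff_eq_0_iff_ennreal top.not_eq_extremum order_le_less_trans)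
  finally have "AE x in lborel. G x - F x = 0"
    using nn_integral_0_iff_AE[of "\<lambda>x. G x - F x"] Gm Fm by auto
  moreover have "AE x in lborel. F x \<noteq> \<infinity>" by (rule nn_integral_PInf_AE[OF Fm fin])
  ultimately show ?thesis
    by eventually_elim (metis ennreal_minus_eq_0 le antisym)
qed

lemma nn_integral_exp_decay:
  fixes C k :: real
  assumes C: "C \<ge> 0" and k: "k > 0"
  shows "(\<integral>\<^sup>+t. indicator {0..} t * ennreal (C * exp (-k * t)) \<partial>lborel) = ennreal (C / k)"
proof -
  have eq: "(\<lambda>t. indicator {0..} t * ennreal (C * exp (-k * t))) = (\<lambda>t. ennreal (indicator {0..} t * (C * exp (-k * t))))"
    by (auto simp: fun_eq_iff indicator_def)
  have hi: "((\<lambda>x. exp (-k * x)) has_integral exp (-k * 0) / k) {0..}"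
    by (rule has_integral_exp_minus_to_infinity[OF k])
  then have "((\<lambda>x. C * exp (-k * x)) has_integral C * (exp (-k * 0) / k)) {0..}"
    by (rule has_integral_mult_right)
  then have "((\<lambda>x. if x \<in> {0..} then C * exp (-k * x) else 0) has_integral C / k) UNIV"
    unfolding has_integral_restrict_UNIV by simp
  moreover have "(\<lambda>x. if x \<in> {0..} then C * exp (-k * x) else 0) = (\<lambda>t. indicator {0..} t * (C * exp (-k * t)))"
    by (auto simp: fun_eq_iff indicator_def)
  ultimately have hi2: "((\<lambda>t. indicator {0..} t * (C * exp (-k * t))) has_integral C / k) UNIV" by simp
  have "integral\<^sup>N lborel (\<lambda>t. ennreal (indicator {0..} t * (C * exp (-k * t)))) = ennreal (C / k)"
    by (rule nn_integral_has_integral_lborel[OF _ _ hi2]) (use C in \<open>auto simp: indicator_def\<close>)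
  then show ?thesis unfolding eq .
qed

lemma W12_continuous_on:
  assumes "W12 tau x1" "tau > 0"
  shows "continuous_on {-tau..0} x1"
proof -
  obtain g where gm: "g \<in> borel_measurable lborel" and gi: "set_integrable lborel {-tau..0} g"
    and rep: "\<forall>s\<in>{-tau..0}. x1 s = x1 (-tau) + (LINT u:{-tau..s}|lborel. g u)"
    using assms(1) unfolding W12_def by blast
  have gh: "g integrable_on {-tau..0}" using set_borel_integral_eq_integral(1)[OF gi] .
  have c: "continuous_on {-tau..0} (\<lambda>s. x1 (-tau) + integral {-tau..s} g)"
    by (intro continuous_intros indefinite_integral_continuous_1 gh)
  show ?thesis
  proof (rule continuous_on_eq[OF c])
    fix s assume s: "s \<in> {-tau..0}"
    have "set_integrable lborel {-tau..s} g"
      by (rule set_integrable_subset[OF gi]) (use s in auto)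
    then have "(LINT u:{-tau..s}|lborel. g u) = integral {-tau..s} g"
      by (rule set_borel_integral_eq_integral(2))
    moreover have "x1 s = x1 (-tau) + (LINT u:{-tau..s}|lborel. g u)" using rep s by blast
    ultimately show "x1 (-tau) + integral {-tau..s} g = x1 s" by linarith
  qed
qed

lemma nn_integral_le_of_budget:
  fixes P Q R S :: "real \<Rightarrow> ennreal"
  assumes [measurable]: "P \<in> borel_measurable lborel" "Q \<in> borel_measurable lborel"
      "R \<in> borel_measurable lborel" "S \<in> borel_measurable lborel"
    and le: "\<And>t. P t + R t \<le> Q t + S t"
    and R: "integral\<^sup>N lborel R = ennreal B" and S: "integral\<^sup>N lborel S \<le> ennreal B"
  shows "integral\<^sup>N lborel P \<le> integral\<^sup>N lborel Q"
    and "integral\<^sup>N lborel P = integral\<^sup>N lborel Q \<Longrightarrow> integral\<^sup>N lborel Q \<noteq> \<infinity>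
      \<Longrightarrow> AE t in lborel. P t + R t = Q t + S t"
proof -
  have "integral\<^sup>N lborel P + ennreal B = (\<integral>\<^sup>+t. P t + R t \<partial>lborel)"
    by (simp add: nn_integral_add R)
  also have "\<dots> \<le> (\<integral>\<^sup>+t. Q t + S t \<partial>lborel)" by (intro nn_integral_mono le)
  also have "\<dots> = integral\<^sup>N lborel Q + integral\<^sup>N lborel S" by (simp add: nn_integral_add)
  also have "\<dots> \<le> integral\<^sup>N lborel Q + ennreal B" using S by (rule add_left_mono)
  finally have main: "integral\<^sup>N lborel P + ennreal B \<le> integral\<^sup>N lborel Q + ennreal B" .
  then show "integral\<^sup>N lborel P \<le> integral\<^sup>N lborel Q"
    by (simp add: add.commute[of _ "ennreal B"])
  assume eq: "integral\<^sup>N lborel P = integral\<^sup>N lborel Q" and fin: "integral\<^sup>N lborel Q \<noteq> \<infinity>"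
  show "AE t in lborel. P t + R t = Q t + S t"
  proof (rule AE_eq_of_nn_integral_ge)
    have "(\<integral>\<^sup>+t. Q t + S t \<partial>lborel) \<le> integral\<^sup>N lborel Q + ennreal B"
      using S by (simp add: nn_integral_add add_left_mono)
    also have "\<dots> = (\<integral>\<^sup>+t. P t + R t \<partial>lborel)" by (simp add: nn_integral_add R eq)
    finally show "(\<integral>\<^sup>+t. Q t + S t \<partial>lborel) \<le> (\<integral>\<^sup>+t. P t + R t \<partial>lborel)" .
    show "(\<integral>\<^sup>+t. P t + R t \<partial>lborel) \<noteq> \<infinity>" using fin by (simp add: nn_integral_add R eq)
  qed (use le in auto)
qed

lemma integral_equation_exp_unique:
  fixes W :: "real \<Rightarrow> real" and a Y :: real
  assumes Wi: "\<And>T. T \<ge> 0 \<Longrightarrow> set_integrable lborel {0..T} W"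
    and W: "\<And>t. t \<ge> 0 \<Longrightarrow> W t = Y - a * (LINT u:{0..t}|lborel. W u)"
    and t: "t \<ge> 0"
  shows "W t = Y * exp (- a * t)"
proof (cases "a = 0")
  case True
  then show ?thesis using W[OF t] by simp
next
  case False
  have expint: "a * (LINT u:{0..t}|lborel. Y * exp (- a * u)) = Y * (1 - exp (- a * t))" if "0 \<le> t" for t
  proof -
    have "(LINT u:{0..t}|lborel. Y * exp (- a * u)) = Y * (\<integral>u. indicator {0..t} u * exp ((- a) * u + 0) \<partial>lborel)"
      by (simp add: set_lebesgue_integral_def)
    also have "(\<integral>u. indicator {0..t} u * exp ((- a) * u + 0) \<partial>lborel) = exp 0 * (exp ((- a) * t) - exp ((- a) * 0)) / (- a)"
      by (rule integral_indicator_exp_affine) (use that False in auto)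
    finally show ?thesis using False by (simp add: field_simps)
  qed
  have ei: "set_integrable lborel {0..T} (\<lambda>u. Y * exp (- a * u))" for T
    by (rule borel_integrable_atLeastAtMost') (intro continuous_intros)
  define D where "D = (\<lambda>t. W t - Y * exp (- a * t))"
  have Di: "set_integrable lborel {0..T} D" if "0 \<le> T" for T
    unfolding D_def by (rule set_integral_diff(1)[OF Wi[OF that] ei])
  have Dabs: "set_integrable lborel {0..T} (\<lambda>u. \<bar>D u\<bar>)" if "0 \<le> T" for T
    using set_integrable_abs[OF Di[OF that]] .
  have Did: "D t = - a * (LINT u:{0..t}|lborel. D u)" if t: "0 \<le> t" for t
  proof -
    define LW where "LW = (LINT u:{0..t}|lborel. W u)"
    define LE where "LE = (LINT u:{0..t}|lborel. Y * exp (- a * u))"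
    have I: "(LINT u:{0..t}|lborel. D u) = LW - LE"
      unfolding D_def LW_def LE_def by (rule set_integral_diff(2)[OF Wi[OF t] ei])
    have "W t = Y - a * LW" "a * LE = Y * (1 - exp (- a * t))"
      using W[OF t] expint[OF t] by (simp_all add: LW_def LE_def)
    then show ?thesis unfolding I by (simp add: D_def algebra_simps)
  qed
  have "AE t in lborel. t \<ge> 0 \<longrightarrow> \<bar>D t\<bar> = 0"
  proof (rule gronwall_AE_zero[OF Dabs _ abs_ge_zero])
    show "AE t in lborel. 0 \<le> t \<longrightarrow> 0 \<le> \<bar>D t\<bar> \<and> \<bar>D t\<bar> \<le> \<bar>a\<bar> * (LINT u:{0..t}|lborel. \<bar>D u\<bar>)"
    proof (rule AE_I2, intro impI conjI)
      fix t :: real assume t: "0 \<le> t"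
      have "\<bar>LINT u:{0..t}|lborel. D u\<bar> \<le> (LINT u:{0..t}|lborel. \<bar>D u\<bar>)"
        unfolding set_lebesgue_integral_def real_scaleR_def
        by (rule integral_abs_bound_integral)
           (use Di[OF t] Dabs[OF t] in \<open>auto simp: set_integrable_def abs_mult\<close>)
      then show "\<bar>D t\<bar> \<le> \<bar>a\<bar> * (LINT u:{0..t}|lborel. \<bar>D u\<bar>)"
        using Did[OF t] by (simp add: abs_mult mult_left_mono)
    qed simp
  qed
  then have AED: "AE u in lborel. u \<ge> 0 \<longrightarrow> W u = Y * exp (- a * u)"
    by eventually_elim (auto simp: D_def)
  have "(LINT u:{0..t}|lborel. W u) = (LINT u:{0..t}|lborel. Y * exp (- a * u))"
    unfolding set_lebesgue_integral_def real_scaleR_def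
  proof (rule integral_cong_AE)
    show "(\<lambda>u. indicator {0..t} u * W u) \<in> borel_measurable lborel"
      using Wi[OF t] by (auto simp: set_integrable_def)
    show "AE u in lborel. indicator {0..t} u * W u = indicator {0..t} u * (Y * exp (- a * u))"
      using AED by eventually_elim (auto simp: indicator_def)
  qed measurable
  then show ?thesis using W[OF t] expint[OF t] by (simp add: algebra_simps)
qed

section \<open>The state equation and the functional G\<close>

lemma delay_kernel_exp_identity:
  fixes r eta tau t y b :: real
  assumes b: "b = r + eta" "b > 0"
  shows "exp(-r * t) * (if t - y - tau \<le> 0 then exp (eta * (y-t)) * (1 - exp (b * (t-y-tau))) / b else 0)
    + exp (eta * y) * (exp (-b * min t (y+tau)) - exp (-b * y)) / (-b)
    = (1 - exp(-b * tau))/b * exp(-r * y)"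
proof (cases "t - y - tau \<le> 0")
  case True
  then have m: "min t (y+tau) = t" by simp
  have e1: "exp(-r * t) * exp (eta * (y-t)) = exp (eta * y) * exp (-b * t)"
    by (simp add: exp_add[symmetric] b algebra_simps)
  have e2: "exp(-r * t) * (exp (eta * (y-t)) * exp (b * (t-y-tau))) = exp(-b * tau) * exp(-r * y)"
    by (simp add: exp_add[symmetric] b algebra_simps)
  have e3: "exp (eta * y) * exp (-b * y) = exp(-r * y)"
    by (simp add: exp_add[symmetric] b algebra_simps)
  have "exp(-r * t) * (if t - y - tau \<le> 0 then exp (eta * (y-t)) * (1 - exp (b * (t-y-tau))) / b else 0)
    + exp (eta * y) * (exp (-b * min t (y+tau)) - exp (-b * y)) / (-b)
    = (exp(-r * t) * exp (eta * (y-t)) - exp(-r * t) * (exp (eta * (y-t)) * exp (b * (t-y-tau)))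
       - exp (eta * y) * exp (-b * t) + exp (eta * y) * exp (-b * y)) / b"
    using True b(2) unfolding m by (simp add: field_simps)
  also have "\<dots> = (1 - exp(-b * tau))/b * exp(-r * y)"
    unfolding e1 e2 e3 using b(2) by (simp add: field_simps)
  finally show ?thesis .
next
  case False
  then have m: "min t (y+tau) = y + tau" by simp
  have e3: "exp (eta * y) * exp (-b * y) = exp(-r * y)"
    by (simp add: exp_add[symmetric] b algebra_simps)
  have e4: "exp (eta * y) * exp (-b * (y+tau)) = exp(-b * tau) * exp(-r * y)"
    by (simp add: exp_add[symmetric] b algebra_simps)
  have "exp(-r * t) * (if t - y - tau \<le> 0 then exp (eta * (y-t)) * (1 - exp (b * (t-y-tau))) / b else 0)
    + exp (eta * y) * (exp (-b * min t (y+tau)) - exp (-b * y)) / (-b)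
    = (exp (eta * y) * exp (-b * y) - exp (eta * y) * exp (-b * (y+tau))) / b"
    using False b(2) unfolding m by (simp add: field_simps)
  also have "\<dots> = (1 - exp(-b * tau))/b * exp(-r * y)"
    unfolding e3 e4 using b(2) by (simp add: field_simps)
  finally show ?thesis .
qed

lemma integral_delay_kernel_state:
  fixes r eta tau t y b :: real
  assumes y: "0 \<le> y" "y \<le> t" and b: "b = r + eta" "b > 0"
  shows "(\<integral>x. (if -tau \<le> x \<and> x \<le> 0 \<and> 0 \<le> y \<and> y \<le> t \<and> t - x - tau \<le> y
      then exp (r * x + eta * (y - t + x)) else 0) \<partial>lborel)
    = (if t - y - tau \<le> 0 then exp (eta * (y-t)) * (1 - exp (b * (t-y-tau))) / b else 0)"
proof (cases "t - y - tau \<le> 0")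
  case True
  have "(\<integral>x. (if -tau \<le> x \<and> x \<le> 0 \<and> 0 \<le> y \<and> y \<le> t \<and> t - x - tau \<le> y
      then exp (r * x + eta * (y - t + x)) else 0) \<partial>lborel)
      = (\<integral>x. indicator {t-y-tau..0} x * exp (b * x + eta * (y-t)) \<partial>lborel)"
    by (rule Bochner_Integration.integral_cong) (use y True in \<open>auto simp: indicator_def b algebra_simps\<close>)
  also have "\<dots> = exp (eta * (y-t)) * (exp (b * 0) - exp (b * (t-y-tau))) / b"
    by (rule integral_indicator_exp_affine) (use True b in auto)
  finally show ?thesis using True by simp
next
  case False
  have "(if -tau \<le> x \<and> x \<le> 0 \<and> 0 \<le> y \<and> y \<le> t \<and> t - x - tau \<le> y
      then exp (r * x + eta * (y - t + x)) else 0) = 0" for x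
    using False by auto
  then show ?thesis using False by simp
qed

lemma integral_delay_kernel_path:
  fixes r eta tau t y b :: real
  assumes y: "0 \<le> y" "y \<le> t" and tau: "tau > 0" and b: "b = r + eta" "b > 0"
  shows "(\<integral>x. (if 0 \<le> x \<and> x \<le> t \<and> 0 \<le> y \<and> y \<le> t \<and> x - tau \<le> y \<and> y \<le> x
      then exp (-r * x + eta * (y - x)) else 0) \<partial>lborel)
    = exp (eta * y) * (exp (-b * min t (y+tau)) - exp (-b * y)) / (-b)"
proof -
  have "(\<integral>x. (if 0 \<le> x \<and> x \<le> t \<and> 0 \<le> y \<and> y \<le> t \<and> x - tau \<le> y \<and> y \<le> x
      then exp (-r * x + eta * (y - x)) else 0) \<partial>lborel)
      = (\<integral>x. indicator {y..min t (y+tau)} x * exp ((-b) * x + eta * y) \<partial>lborel)"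
    by (rule Bochner_Integration.integral_cong) (use y in \<open>auto simp: indicator_def b algebra_simps\<close>)
  also have "\<dots> = exp (eta * y) * (exp (-b * min t (y+tau)) - exp (-b * y)) / (-b)"
    by (rule integral_indicator_exp_affine) (use y b tau in auto)
  finally show ?thesis .
qed

lemma delay_part_integral_identity:
  fixes c :: "real \<Rightarrow> real" and r eta tau t :: real
  assumes r: "r > 0" and eta: "eta > 0" and tau: "tau > 0" and t: "t \<ge> 0"
    and ci: "set_integrable lborel {0..t} c"
  defines "Q \<equiv> \<lambda>t s. LINT u:{max 0 (t - s - tau)..t}|lborel. c u * exp (eta * (u - t + s))"
  shows "set_integrable lborel {-tau..0} (\<lambda>s. Q t s * exp (r * s))"
    "set_integrable lborel {0..t} (\<lambda>u. exp(-r * u) * Q u 0)"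
    "(1 - exp(-(r+eta) * tau))/(r+eta) * (LINT u:{0..t}|lborel. exp(-r * u) * c u)
     = exp(-r * t) * (LINT s:{-tau..0}|lborel. Q t s * exp (r * s)) + (LINT u:{0..t}|lborel. exp(-r * u) * Q u 0)"
proof -
  \<comment> \<open>Both right-hand integrals are double integrals of c; after Fubini the inner
    kernel integrals add up pointwise by delay_kernel_exp_identity.\<close>
  define b where "b = r + eta"
  have b: "b > 0" using r eta by (simp add: b_def)
  define fc where "fc = (\<lambda>y. indicator {0..t} y * c y)"
  have fci: "integrable lborel fc" using ci by (simp add: fc_def set_integrable_def)
  define k1 where "k1 = (\<lambda>x y. if -tau \<le> x \<and> x \<le> 0 \<and> 0 \<le> y \<and> y \<le> t \<and> t - x - tau \<le> y
       then exp (r * x + eta * (y - t + x)) else (0::real))"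
  define k2 where "k2 = (\<lambda>x y. if 0 \<le> x \<and> x \<le> t \<and> 0 \<le> y \<and> y \<le> t \<and> x - tau \<le> y \<and> y \<le> x
       then exp (-r * x + eta * (y - x)) else (0::real))"
  have k1m: "(\<lambda>p. k1 (fst p) (snd p)) \<in> borel_measurable (lborel \<Otimes>\<^sub>M lborel)"
    unfolding k1_def by measurable
  have k2m: "(\<lambda>p. k2 (fst p) (snd p)) \<in> borel_measurable (lborel \<Otimes>\<^sub>M lborel)"
    unfolding k2_def by measurable
  have k1b: "\<bar>k1 x y\<bar> \<le> 1 * indicator {-tau..0} x" for x y
    unfolding k1_def using r eta by (auto simp: indicator_def intro!: add_nonpos_nonpos mult_nonneg_nonpos)
  have k2b: "\<bar>k2 x y\<bar> \<le> 1 * indicator {0..t} x" for x y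
  proof -
    have "eta * (y - x) \<le> r * x" if "0 \<le> y" "y \<le> x"
    proof -
      have "eta * (y - x) \<le> 0" using that eta by (intro mult_nonneg_nonpos) auto
      also have "0 \<le> r * x" using that r by simp
      finally show ?thesis .
    qed
    then show ?thesis unfolding k2_def by (auto simp: indicator_def)
  qed
  note F1 = integral_kernel_swap[OF fci k1m k1b]
  note F2 = integral_kernel_swap[OF fci k2m k2b]
  have R1: "indicator {-tau..0} s * (Q t s * exp (r * s)) = (\<integral>y. fc y * k1 s y \<partial>lborel)" for s
  proof (cases "-tau \<le> s \<and> s \<le> 0")
    case True
    have "indicator {-tau..0} s * (Q t s * exp (r * s))
        = (\<integral>y. indicator {max 0 (t - s - tau)..t} y * (c y * exp (eta * (y - t + s))) * exp (r * s) \<partial>lborel)"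
      using True by (simp add: Q_def set_lebesgue_integral_def)
    also have "\<dots> = (\<integral>y. fc y * k1 s y \<partial>lborel)"
      by (rule Bochner_Integration.integral_cong)
         (auto simp: fc_def k1_def indicator_def True algebra_simps simp flip: exp_add)
    finally show ?thesis .
  next
    case False then show ?thesis by (auto simp: k1_def)
  qed
  have R2: "indicator {0..t} x * (exp(-r * x) * Q x 0) = (\<integral>y. fc y * k2 x y \<partial>lborel)" for x
  proof (cases "0 \<le> x \<and> x \<le> t")
    case True
    have "indicator {0..t} x * (exp(-r * x) * Q x 0)
        = (\<integral>y. exp(-r * x) * (indicator {max 0 (x - tau)..x} y * (c y * exp (eta * (y - x)))) \<partial>lborel)"
      using True by (simp add: Q_def set_lebesgue_integral_def)
    also have "\<dots> = (\<integral>y. fc y * k2 x y \<partial>lborel)"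
      by (rule Bochner_Integration.integral_cong)
         (use True in \<open>auto simp: fc_def k2_def indicator_def algebra_simps simp flip: exp_add\<close>)
    finally show ?thesis .
  next
    case False then show ?thesis by (auto simp: k2_def)
  qed
  show I1: "set_integrable lborel {-tau..0} (\<lambda>s. Q t s * exp (r * s))"
    unfolding set_integrable_def using F1(2) by (simp add: R1)
  show I2: "set_integrable lborel {0..t} (\<lambda>u. exp(-r * u) * Q u 0)"
    unfolding set_integrable_def real_scaleR_def R2 by (rule F2(2))
  have K1: "fc y * (\<integral>x. k1 x y \<partial>lborel) =
      fc y * (if t - y - tau \<le> 0 then exp (eta * (y-t)) * (1 - exp (b * (t-y-tau))) / b else 0)" for y
    using integral_delay_kernel_state[OF _ _ b_def b, of y t tau] by (cases "0 \<le> y \<and> y \<le> t") (auto simp: fc_def k1_def)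
  have K2: "fc y * (\<integral>x. k2 x y \<partial>lborel) =
      fc y * (exp (eta * y) * (exp (-b * min t (y+tau)) - exp (-b * y)) / (-b))" for y
    using integral_delay_kernel_path[OF _ _ tau b_def b, of y t] by (cases "0 \<le> y \<and> y \<le> t") (auto simp: fc_def k2_def)
  note KK = delay_kernel_exp_identity[OF b_def b]
  have "exp(-r * t) * (LINT s:{-tau..0}|lborel. Q t s * exp (r * s)) + (LINT u:{0..t}|lborel. exp(-r * u) * Q u 0)
      = exp(-r * t) * (\<integral>y. fc y * (\<integral>x. k1 x y \<partial>lborel) \<partial>lborel) + (\<integral>y. fc y * (\<integral>x. k2 x y \<partial>lborel) \<partial>lborel)"
  proof -
    have "(LINT s:{-tau..0}|lborel. Q t s * exp (r * s)) = (\<integral>y. fc y * (\<integral>x. k1 x y \<partial>lborel) \<partial>lborel)"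
      unfolding set_lebesgue_integral_def real_scaleR_def R1 by (rule F1(1))
    moreover have "(LINT u:{0..t}|lborel. exp(-r * u) * Q u 0) = (\<integral>y. fc y * (\<integral>x. k2 x y \<partial>lborel) \<partial>lborel)"
      unfolding set_lebesgue_integral_def real_scaleR_def R2 by (rule F2(1))
    ultimately show ?thesis by simp
  qed
  also have "\<dots> = (\<integral>y. exp(-r * t) * (fc y * (\<integral>x. k1 x y \<partial>lborel)) + fc y * (\<integral>x. k2 x y \<partial>lborel) \<partial>lborel)"
    using F1(3) F2(3) by simp
  also have "\<dots> = (\<integral>y. fc y * ((1 - exp(-b * tau))/b * exp(-r * y)) \<partial>lborel)"
  proof (rule Bochner_Integration.integral_cong)
    fix y
    have "exp(-r * t) * (fc y * (\<integral>x. k1 x y \<partial>lborel)) + fc y * (\<integral>x. k2 x y \<partial>lborel)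
       = fc y * (exp(-r * t) * (if t - y - tau \<le> 0 then exp (eta * (y-t)) * (1 - exp (b * (t-y-tau))) / b else 0)
      + exp (eta * y) * (exp (-b * min t (y+tau)) - exp (-b * y)) / (-b))"
      unfolding K1 K2 by (simp only: distrib_left mult.assoc mult.left_commute)
    also have "\<dots> = fc y * ((1 - exp(-b * tau))/b * exp(-r * y))" unfolding KK ..
    finally show "exp(-r * t) * (fc y * (\<integral>x. k1 x y \<partial>lborel)) + fc y * (\<integral>x. k2 x y \<partial>lborel)
       = fc y * ((1 - exp(-b * tau))/b * exp(-r * y))" .
  qed simp
  also have "\<dots> = (1 - exp(-(r+eta) * tau))/(r+eta) * (LINT u:{0..t}|lborel. exp(-r * u) * c u)"
    by (simp add: fc_def b_def set_lebesgue_integral_def algebra_simps flip: integral_mult_right_zero)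
  finally show "(1 - exp(-(r+eta) * tau))/(r+eta) * (LINT u:{0..t}|lborel. exp(-r * u) * c u)
     = exp(-r * t) * (LINT s:{-tau..0}|lborel. Q t s * exp (r * s)) + (LINT u:{0..t}|lborel. exp(-r * u) * Q u 0)"
    by simp
qed

lemma initial_part_integral_identity:
  fixes x1 :: "real \<Rightarrow> real" and r tau t :: real
  assumes r: "r > 0" and tau: "tau > 0" and t: "t \<ge> 0" and x1c: "continuous_on {-tau..0} x1"
  defines "P \<equiv> \<lambda>t s. if s - t \<ge> -tau then x1 (s - t) else 0"
  shows "set_integrable lborel {-tau..0} (\<lambda>s. P t s * exp (r * s))"
    "set_integrable lborel {0..t} (\<lambda>u. exp (-r * u) * P u 0)"
    "exp (-r * t) * (LINT s:{-tau..0}|lborel. P t s * exp (r * s))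
      = (LINT s:{-tau..0}|lborel. x1 s * exp (r * s)) - (LINT u:{0..t}|lborel. exp (-r * u) * P u 0)"
proof -
  define g where "g = (\<lambda>v. indicator {-tau..0} v * (x1 v * exp (r * v)))"
  have "continuous_on {-tau..0} (\<lambda>v. x1 v * exp (r * v))"
    by (intro continuous_intros x1c)
  then have gi: "integrable lborel g"
    using borel_integrable_atLeastAtMost'[of "-tau" 0 "\<lambda>v. x1 v * exp (r * v)"]
    by (simp add: g_def set_integrable_def)
  have gm[measurable]: "g \<in> borel_measurable lborel" using gi by auto
  define h1 where "h1 = (\<lambda>v. indicator {-tau..-t} v * g v)"
  define h2 where "h2 = (\<lambda>v. indicator {-t..0} v * g v)"
  have h1i: "integrable lborel h1"
    by (rule Bochner_Integration.integrable_bound[OF gi]) (auto simp: h1_def indicator_def)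
  have h2i: "integrable lborel h2"
    by (rule Bochner_Integration.integrable_bound[OF gi]) (auto simp: h2_def indicator_def)
  have E1: "indicator {-tau..0} s * (P t s * exp (r * s)) = exp (r * t) * h1 (-t + s)" for s
    using t by (auto simp: P_def h1_def g_def indicator_def algebra_simps simp flip: exp_add)
  have E2: "indicator {0..t} u * (exp (-r * u) * P u 0) = h2 (0 + (-1) * u)" for u
    using t by (auto simp: P_def h2_def g_def indicator_def algebra_simps)
  have i1: "integrable lborel (\<lambda>s. h1 (-t + s))"
    using lborel_integrable_real_affine[OF h1i, of 1 "-t"] by simp
  have i2: "integrable lborel (\<lambda>u. h2 (0 + (-1) * u))"
    using lborel_integrable_real_affine[OF h2i, of "-1" 0] by simp
  show "set_integrable lborel {-tau..0} (\<lambda>s. P t s * exp (r * s))"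
    unfolding set_integrable_def real_scaleR_def E1 using i1 by simp
  show "set_integrable lborel {0..t} (\<lambda>u. exp (-r * u) * P u 0)"
    unfolding set_integrable_def real_scaleR_def E2 using i2 by simp
  have S1: "exp (-r * t) * (LINT s:{-tau..0}|lborel. P t s * exp (r * s)) = integral\<^sup>L lborel h1"
  proof -
    have "(LINT s:{-tau..0}|lborel. P t s * exp (r * s)) = exp (r * t) * (\<integral>s. h1 (-t + s) \<partial>lborel)"
      unfolding set_lebesgue_integral_def real_scaleR_def E1 by simp
    also have "(\<integral>s. h1 (-t + s) \<partial>lborel) = integral\<^sup>L lborel h1"
      using lborel_integral_real_affine[of 1 h1 "-t"] by simp
    finally show ?thesis by (simp add: exp_minus field_simps)
  qed
  have S2: "(LINT u:{0..t}|lborel. exp (-r * u) * P u 0) = integral\<^sup>L lborel h2"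
  proof -
    have "(LINT u:{0..t}|lborel. exp (-r * u) * P u 0) = (\<integral>u. h2 (0 + (-1) * u) \<partial>lborel)"
      unfolding set_lebesgue_integral_def real_scaleR_def E2 by simp
    also have "\<dots> = integral\<^sup>L lborel h2"
      using lborel_integral_real_affine[of "-1" h2 0] by simp
    finally show ?thesis .
  qed
  have S3: "(LINT s:{-tau..0}|lborel. x1 s * exp (r * s)) = integral\<^sup>L lborel h1 + integral\<^sup>L lborel h2"
  proof -
    have "(LINT s:{-tau..0}|lborel. x1 s * exp (r * s)) = integral\<^sup>L lborel g"
      by (simp add: set_lebesgue_integral_def g_def)
    also have "\<dots> = (\<integral>v. h1 v + h2 v \<partial>lborel)"
    proof (rule integral_cong_AE)
      show "AE v in lborel. g v = h1 v + h2 v"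
        using AE_lborel_singleton[of "-t"]
        by eventually_elim (auto simp: h1_def h2_def g_def indicator_def)
    qed (use h1i h2i in auto)
    also have "\<dots> = integral\<^sup>L lborel h1 + integral\<^sup>L lborel h2"
      using h1i h2i by simp
    finally show ?thesis .
  qed
  show "exp (-r * t) * (LINT s:{-tau..0}|lborel. P t s * exp (r * s))
      = (LINT s:{-tau..0}|lborel. x1 s * exp (r * s)) - (LINT u:{0..t}|lborel. exp (-r * u) * P u 0)"
    using S1 S2 S3 by simp
qed

lemma Gfun_eq:
  "Gfun A delta eps eta tau (y0, y1)
     = y0 * kappa0 A delta eps eta tau - (LINT s:{-tau..0}|lborel. y1 s * exp ((A - delta) * s))"
  by (simp add: Gfun_def kappa1_def set_lebesgue_integral_def)

lemma kappa0_eq: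
  assumes b: "A - delta + eta \<noteq> 0" and tau: "tau \<ge> 0"
  shows "kappa0 A delta eps eta tau
    = 1 - eps * (1 - exp (- ((A - delta + eta) * tau))) / (A - delta + eta)"
proof -
  define b where "b = A - delta + eta"
  have "(LINT s:{-tau..0}|lborel. exp ((A - delta + eta) * s)) = (\<integral>s. indicator {-tau..0} s * exp (b * s + 0) \<partial>lborel)"
    by (simp add: set_lebesgue_integral_def b_def)
  also have "\<dots> = exp 0 * (exp (b * 0) - exp (b * (-tau))) / b"
    by (rule integral_indicator_exp_affine) (use tau b in \<open>auto simp: b_def\<close>)
  finally show ?thesis by (simp add: kappa0_def b_def)
qed

lemma kappa0_pos:
  assumes r: "A - delta > 0" and eps: "0 \<le> eps" "eps \<le> eta" and tau: "tau \<ge> 0"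
  shows "kappa0 A delta eps eta tau > 0"
proof -
  define b where "b = A - delta + eta"
  have b: "b > 0" using r eps by (simp add: b_def)
  have "(1 - exp (- (b * tau))) / b < 1 / b" using b by (simp add: divide_strict_right_mono)
  moreover have "eps * (1 / b) < 1" using b eps r by (simp add: b_def field_simps)
  ultimately have "eps * ((1 - exp (- (b * tau))) / b) < 1"
    using eps by (smt (verit, best) mult_left_mono)
  moreover have "kappa0 A delta eps eta tau = 1 - eps * (1 - exp (- (b * tau))) / b"
    using kappa0_eq[of A delta eta tau eps] b tau unfolding b_def[symmetric] by simp
  ultimately show ?thesis by simp
qed

lemma discounted_stX0:
  "exp (- (A - delta) * t) * stX0 A delta x0 c t
     = x0 - (LINT u:{0..t}|lborel. exp (- (A - delta) * u) * c u)"
proof -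
  define r where "r = A - delta"
  have "(LINT u:{0..t}|lborel. exp ((A - delta) * (t - u)) * c u)
      = (LINT u:{0..t}|lborel. exp (r * t) * (exp (-r * u) * c u))"
    by (rule set_lebesgue_integral_cong) (auto simp: r_def algebra_simps simp flip: exp_add)
  also have "\<dots> = exp (r * t) * (LINT u:{0..t}|lborel. exp (-r * u) * c u)" by simp
  finally show ?thesis
    by (simp add: stX0_def r_def[symmetric] right_diff_distrib exp_minus field_simps)
qed

lemma discounted_G_state:
  fixes c :: "real \<Rightarrow> real" and x1 :: "real \<Rightarrow> real"
  assumes r: "A - delta > 0" and eta: "eta > 0" and tau: "tau > 0" and t: "t \<ge> 0"
    and ci: "set_integrable lborel {0..t} c" and x1c: "continuous_on {-tau..0} x1"
  shows "exp (-(A - delta) * t) * Gfun A delta eps eta tau (state A delta eps eta tau (x0, x1) c t)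
    = Gfun A delta eps eta tau (x0, x1)
      - (LINT u:{0..t}|lborel. exp (-(A - delta) * u) * (c u - stX1 eps eta tau x1 c u 0))"
proof -
  \<comment> \<open>Split X1 = P + eps Q into the shifted initial datum P and the delay part Q; the identities
    for P and Q combine with the one for X0.\<close>
  define r where "r = A - delta"
  have r0: "r > 0" using r by (simp add: r_def)
  define b where "b = r + eta"
  have b: "b > 0" using r0 eta by (simp add: b_def)
  define P where "P = (\<lambda>t s. if s - t \<ge> -tau then x1 (s - t) else 0)"
  define Q where "Q = (\<lambda>t s. LINT u:{max 0 (t - s - tau)..t}|lborel. c u * exp (eta * (u - t + s)))"
  have X1: "stX1 eps eta tau x1 c t' = (\<lambda>s. P t' s + eps * Q t' s)" for t'
    by (simp add: stX1_def P_def Q_def)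
  have PI1: "set_integrable lborel {-tau..0} (\<lambda>s. P t s * exp (r * s))"
    using initial_part_integral_identity(1)[OF r0 tau t x1c] by (simp add: P_def)
  have PI2: "set_integrable lborel {0..t} (\<lambda>u. exp (-r * u) * P u 0)"
    using initial_part_integral_identity(2)[OF r0 tau t x1c] by (simp add: P_def)
  have PI3: "exp (-r * t) * (LINT s:{-tau..0}|lborel. P t s * exp (r * s))
      = (LINT s:{-tau..0}|lborel. x1 s * exp (r * s)) - (LINT u:{0..t}|lborel. exp (-r * u) * P u 0)"
    using initial_part_integral_identity(3)[OF r0 tau t x1c] by (simp add: P_def)
  have QI1: "set_integrable lborel {-tau..0} (\<lambda>s. Q t s * exp (r * s))"
    using delay_part_integral_identity(1)[OF r0 eta tau t ci] by (simp add: Q_def)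
  have QI2: "set_integrable lborel {0..t} (\<lambda>u. exp(-r * u) * Q u 0)"
    using delay_part_integral_identity(2)[OF r0 eta tau t ci] by (simp add: Q_def)
  have QI3: "(1 - exp(-(r+eta) * tau))/(r+eta) * (LINT u:{0..t}|lborel. exp(-r * u) * c u)
     = exp(-r * t) * (LINT s:{-tau..0}|lborel. Q t s * exp (r * s)) + (LINT u:{0..t}|lborel. exp(-r * u) * Q u 0)"
    using delay_part_integral_identity(3)[OF r0 eta tau t ci] by (simp add: Q_def)
  have ec: "set_integrable lborel {0..t} (\<lambda>u. exp (-r * u) * c u)"
    by (rule set_integrable_continuous_mult[OF ci]) (intro continuous_intros)
  have k0: "kappa0 A delta eps eta tau = 1 - eps * (1 - exp (-b * tau)) / b"
    using kappa0_eq[of A delta eta tau eps] b tau unfolding r_def[symmetric] b_def[symmetric] by simp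
  have X0: "exp (-r * t) * stX0 A delta x0 c t = x0 - (LINT u:{0..t}|lborel. exp (-r * u) * c u)"
    using discounted_stX0 by (simp add: r_def)
  have G1: "Gfun A delta eps eta tau (state A delta eps eta tau (x0, x1) c t)
     = stX0 A delta x0 c t * kappa0 A delta eps eta tau
       - (LINT s:{-tau..0}|lborel. P t s * exp (r * s)) - eps * (LINT s:{-tau..0}|lborel. Q t s * exp (r * s))"
  proof -
    have "(LINT s:{-tau..0}|lborel. (P t s + eps * Q t s) * kappa1 A delta s)
       = (LINT s:{-tau..0}|lborel. - (P t s * exp (r * s)) - eps * (Q t s * exp (r * s)))"
      by (rule set_lebesgue_integral_cong) (auto simp: kappa1_def r_def algebra_simps)
    also have "\<dots> = - (LINT s:{-tau..0}|lborel. P t s * exp (r * s)) - eps * (LINT s:{-tau..0}|lborel. Q t s * exp (r * s))"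
    proof -
      have m: "set_integrable lborel {-tau..0} (\<lambda>s. - (P t s * exp (r * s)))"
        using PI1 by (simp add: set_integrable_def)
      have "(LINT s:{-tau..0}|lborel. - (P t s * exp (r * s)) - eps * (Q t s * exp (r * s)))
         = (LINT s:{-tau..0}|lborel. - (P t s * exp (r * s))) - (LINT s:{-tau..0}|lborel. eps * (Q t s * exp (r * s)))"
        by (rule set_integral_diff(2)[OF m]) (use QI1 in auto)
      then show ?thesis by (simp add: set_integral_uminus[OF PI1])
    qed
    finally show ?thesis by (simp add: Gfun_def state_def X1)
  qed
  have G0: "Gfun A delta eps eta tau (x0, x1) = x0 * kappa0 A delta eps eta tau - (LINT s:{-tau..0}|lborel. x1 s * exp (r * s))"
    by (simp add: Gfun_eq r_def)
  have H: "(LINT u:{0..t}|lborel. exp (-(A - delta) * u) * (c u - stX1 eps eta tau x1 c u 0))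
     = (LINT u:{0..t}|lborel. exp (-r * u) * c u) - (LINT u:{0..t}|lborel. exp (-r * u) * P u 0)
       - eps * (LINT u:{0..t}|lborel. exp (-r * u) * Q u 0)"
  proof -
    have "(LINT u:{0..t}|lborel. exp (-(A - delta) * u) * (c u - stX1 eps eta tau x1 c u 0))
       = (LINT u:{0..t}|lborel. (exp (-r * u) * c u - exp (-r * u) * P u 0) - eps * (exp (-r * u) * Q u 0))"
      by (rule set_lebesgue_integral_cong) (auto simp: X1 r_def algebra_simps)
    also have "\<dots> = (LINT u:{0..t}|lborel. exp (-r * u) * c u - exp (-r * u) * P u 0) - eps * (LINT u:{0..t}|lborel. exp (-r * u) * Q u 0)"
      using ec PI2 QI2 by (simp add: set_integral_diff)
    also have "\<dots> = (LINT u:{0..t}|lborel. exp (-r * u) * c u) - (LINT u:{0..t}|lborel. exp (-r * u) * P u 0)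
       - eps * (LINT u:{0..t}|lborel. exp (-r * u) * Q u 0)"
      using ec PI2 by (simp add: set_integral_diff)
    finally show ?thesis .
  qed
  define D where "D = (1 - exp (-b * tau)) / b"
  have k0': "kappa0 A delta eps eta tau = 1 - eps * D" using k0 by (simp add: D_def)
  have QI3': "D * (LINT u:{0..t}|lborel. exp(-r * u) * c u)
     = exp(-r * t) * (LINT s:{-tau..0}|lborel. Q t s * exp (r * s)) + (LINT u:{0..t}|lborel. exp(-r * u) * Q u 0)"
    using QI3 by (simp add: D_def b_def)
  have e: "exp (-(A - delta) * t) = exp (-r * t)" by (simp add: r_def)
  show ?thesis unfolding e G1 G0 H k0'
    using X0 PI3 QI3' by algebra
qed

section \<open>The habit formation problem\<close>

lemma L1loc_set_integrable: "L1loc c \<Longrightarrow> 0 \<le> T \<Longrightarrow> set_integrable lborel {0..T} c"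
  by (simp add: L1loc_def)

locale habit_problem =
  fixes A delta rho eps eta tau gam x0 :: real and x1 :: "real \<Rightarrow> real"
  assumes pos: "A > 0" "delta > 0" "rho > 0" "eps > 0" "eta > 0" "tau > 0" "gam > 0" "gam \<noteq> 1"
    and eps_le_eta: "eps \<le> eta" and r0: "A - delta > 0" and rho_gt: "rho > (A - delta) * (1 - gam)"
    and x1_cont: "continuous_on {-tau..0} x1" and x1_nonneg: "\<And>s. s \<in> {-tau..0} \<Longrightarrow> x1 s \<ge> 0"
    and G_pos: "Gfun A delta eps eta tau (x0, x1) > 0"
begin

text \<open>habit c t is the habit level X1(t)[0], and opt_gap is the gap c - X1[0] realised by the
  closed loop.\<close>

definition "r = A - delta"
definition "a = alpha A delta rho gam"
definition "G0 = Gfun A delta eps eta tau (x0, x1)"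
definition "G_path c t = Gfun A delta eps eta tau (state A delta eps eta tau (x0, x1) c t)"
definition "habit c t = stX1 eps eta tau x1 c t 0"
definition "surplus c t = max 0 (c t - habit c t)"
definition "opt_gap t = a * G0 * exp ((r - a) * t)"
definition "disc_cons c t = (LINT u:{0..t}|lborel. exp (-r * u) * c u)"

lemma r_pos: "r > 0" using r0 by (simp add: r_def)
lemma a_pos: "a > 0" using rho_gt pos by (simp add: a_def alpha_def)
lemma G0_pos: "G0 > 0" using G_pos by (simp add: G0_def)
lemma opt_gap_pos: "opt_gap t > 0" using a_pos G0_pos by (simp add: opt_gap_def)
lemma surplus_nonneg: "surplus c t \<ge> 0" by (simp add: surplus_def)

lemma kappa0_positive: "kappa0 A delta eps eta tau > 0"
  using kappa0_pos[OF r0 _ eps_le_eta] pos by simp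

lemma discounted_G_path:
  assumes "L1loc c" "0 \<le> t"
  shows "exp (-r * t) * G_path c t = G0 - (LINT u:{0..t}|lborel. exp (-r * u) * (c u - habit c u))"
  unfolding r_def G_path_def G0_def habit_def
  by (rule discounted_G_state[OF r0 pos(5) pos(6) assms(2) L1loc_set_integrable[OF assms] x1_cont])

lemma discounted_X0:
  "exp (-r * t) * stX0 A delta x0 c t = x0 - disc_cons c t"
  using discounted_stX0 by (simp add: r_def disc_cons_def)

lemma G_path_eq:
  "G_path c t = stX0 A delta x0 c t * kappa0 A delta eps eta tau
     - (LINT s:{-tau..0}|lborel. stX1 eps eta tau x1 c t s * exp (r * s))"
  by (simp add: G_path_def state_def Gfun_eq r_def)

lemma set_integrable_disc_habit:
  assumes "L1loc c" "0 \<le> T"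
  shows "set_integrable lborel {0..T} (\<lambda>u. exp (-r * u) * habit c u)"
proof -
  have P: "set_integrable lborel {0..T} (\<lambda>u. exp (-r * u) * (if 0 - u \<ge> -tau then x1 (0 - u) else 0))"
    using initial_part_integral_identity(2)[OF r_pos pos(6) assms(2) x1_cont] by simp
  have Q: "set_integrable lborel {0..T} (\<lambda>u. exp (-r * u) *
     (LINT v:{max 0 (u - 0 - tau)..u}|lborel. c v * exp (eta * (v - u + 0))))"
    using delay_part_integral_identity(2)[OF r_pos pos(5) pos(6) assms(2) L1loc_set_integrable[OF assms]] by simp
  have "set_integrable lborel {0..T} (\<lambda>u. exp (-r * u) * (if 0 - u \<ge> -tau then x1 (0 - u) else 0)
     + eps * (exp (-r * u) * (LINT v:{max 0 (u - 0 - tau)..u}|lborel. c v * exp (eta * (v - u + 0)))))"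
    using P Q by auto
  then show ?thesis by (simp add: habit_def stX1_def algebra_simps)
qed

lemma set_integrable_disc_control:
  assumes "L1loc c" "0 \<le> T"
  shows "set_integrable lborel {0..T} (\<lambda>u. exp (-r * u) * c u)"
  by (rule set_integrable_continuous_mult[OF L1loc_set_integrable[OF assms]]) (intro continuous_intros)

lemma set_integrable_disc_gap:
  assumes "L1loc c" "0 \<le> T"
  shows "set_integrable lborel {0..T} (\<lambda>u. exp (-r * u) * (c u - habit c u))"
  using set_integral_diff(1)[OF set_integrable_disc_control[OF assms] set_integrable_disc_habit[OF assms]]
  by (simp add: algebra_simps)

lemma set_integrable_X1:
  assumes "L1loc c" and t: "0 \<le> t"
  shows "set_integrable lborel {-tau..0} (\<lambda>s. stX1 eps eta tau x1 c t s * exp (r * s))"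
proof -
  have P: "set_integrable lborel {-tau..0} (\<lambda>s. (if s - t \<ge> -tau then x1 (s - t) else 0) * exp (r * s))"
    using initial_part_integral_identity(1)[OF r_pos pos(6) t x1_cont] by simp
  have Q: "set_integrable lborel {-tau..0} (\<lambda>s. (LINT u:{max 0 (t - s - tau)..t}|lborel. c u * exp (eta * (u - t + s))) * exp (r * s))"
    using delay_part_integral_identity(1)[OF r_pos pos(5) pos(6) t L1loc_set_integrable[OF assms]] by simp
  have "set_integrable lborel {-tau..0} (\<lambda>s. (if s - t \<ge> -tau then x1 (s - t) else 0) * exp (r * s)
     + eps * ((LINT u:{max 0 (t - s - tau)..t}|lborel. c u * exp (eta * (u - t + s))) * exp (r * s)))"
    using P Q by auto
  then show ?thesis by (simp add: stX1_def algebra_simps)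
qed

lemma borel_measurable_surplus:
  assumes "L1loc c"
  shows "(\<lambda>u. indicator {0..} u * surplus c u) \<in> borel_measurable lborel"
proof (rule borel_measurable_indicator_atLeast_of_Icc)
  fix n :: nat
  have c: "(\<lambda>u. indicator {0..real n} u * c u) \<in> borel_measurable lborel"
    using L1loc_set_integrable[OF assms, of "real n"] by (auto simp: set_integrable_def)
  have "(\<lambda>u. indicator {0..real n} u * (exp (-r * u) * habit c u)) \<in> borel_measurable lborel"
    using set_integrable_disc_habit[OF assms, of "real n"] by (auto simp: set_integrable_def)
  then have "(\<lambda>u. exp (r * u) * (indicator {0..real n} u * (exp (-r * u) * habit c u))) \<in> borel_measurable lborel"
    by measurable
  also have "(\<lambda>u. exp (r * u) * (indicator {0..real n} u * (exp (-r * u) * habit c u)))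
     = (\<lambda>u. indicator {0..real n} u * habit c u)"
    by (auto simp: fun_eq_iff simp flip: exp_add)
  finally have "(\<lambda>u. max 0 (indicator {0..real n} u * c u - indicator {0..real n} u * habit c u)) \<in> borel_measurable lborel"
    using c by measurable
  also have "(\<lambda>u. max 0 (indicator {0..real n} u * c u - indicator {0..real n} u * habit c u))
     = (\<lambda>u. indicator {0..real n} u * surplus c u)"
    by (auto simp: fun_eq_iff indicator_def surplus_def)
  finally show "(\<lambda>u. indicator {0..real n} u * surplus c u) \<in> borel_measurable lborel" .
qed

lemma admissibleD:
  assumes "c \<in> Cad A delta eps eta tau (x0, x1)"
  shows "L1loc c" "\<And>t. 0 \<le> t \<Longrightarrow> 0 \<le> stX0 A delta x0 c t"
    "AE t in lborel. t \<ge> 0 \<longrightarrow> 0 \<le> c t \<and> habit c t \<le> c t"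
  using assms by (auto simp: Cad_def habit_def)

end

context habit_problem begin

section \<open>The closed loop\<close>

lemma closed_loop_gap_feedback:
  assumes "closed_loop A delta rho eps eta tau gam (x0, x1) X c"
  shows "AE t in lborel. t \<ge> 0 \<longrightarrow> c t - habit c t = a * G_path c t"
proof -
  have Xs: "\<forall>t\<ge>0. X t = state A delta eps eta tau (x0, x1) c t"
    and "AE t in lborel. t \<ge> 0 \<longrightarrow> c t = snd (X t) 0 + alpha A delta rho gam * Gfun A delta eps eta tau (X t)"
    using assms by (auto simp: closed_loop_def)
  then show ?thesis
    by eventually_elim (use Xs in \<open>auto simp: habit_def G_path_def a_def state_def\<close>)
qed

lemma closed_loop_G_path:
  assumes cl: "closed_loop A delta rho eps eta tau gam (x0, x1) X c" and t: "t \<ge> 0"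
  shows "G_path c t = G0 * exp ((r - a) * t)"
proof -
  have L: "L1loc c" using cl by (simp add: closed_loop_def)
  define g where "g = (\<lambda>u. exp (-r * u) * (c u - habit c u))"
  define W where "W = (\<lambda>t. G0 - (LINT u:{0..t}|lborel. g u))"
  have gi: "set_integrable lborel {0..T} g" if "0 \<le> T" for T
    using set_integrable_disc_gap[OF L that] by (simp add: g_def)
  have Wi: "set_integrable lborel {0..T} W" if "0 \<le> T" for T
    unfolding W_def by (rule set_integrable_const_minus_indef_integral[OF gi[OF that] that])
  have W_G_path: "W t = exp (-r * t) * G_path c t" if "0 \<le> t" for t
    using discounted_G_path[OF L that] by (simp add: W_def g_def)
  \<comment> \<open>The feedback law turns the identity for W into a linear Volterra equation.\<close>
  have volterra: "W t = G0 - a * (LINT u:{0..t}|lborel. W u)" if t: "0 \<le> t" for t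
  proof -
    have "(LINT u:{0..t}|lborel. g u) = (\<integral>u. a * (indicator {0..t} u * W u) \<partial>lborel)"
      unfolding set_lebesgue_integral_def real_scaleR_def
    proof (rule integral_cong_AE)
      show "(\<lambda>u. indicator {0..t} u * g u) \<in> borel_measurable lborel"
        using gi[OF t] by (auto simp: set_integrable_def)
      have [measurable]: "(\<lambda>u. indicator {0..t} u * W u) \<in> borel_measurable lborel"
        using Wi[OF t] by (auto simp: set_integrable_def)
      show "(\<lambda>u. a * (indicator {0..t} u * W u)) \<in> borel_measurable lborel" by measurable
      show "AE u in lborel. indicator {0..t} u * g u = a * (indicator {0..t} u * W u)"
        using closed_loop_gap_feedback[OF cl]
        by eventually_elim (auto simp: indicator_def W_G_path g_def)
    qed
    then show ?thesis by (simp add: W_def set_lebesgue_integral_def)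
  qed
  have "W t = G0 * exp (- a * t)"
    using integral_equation_exp_unique[OF Wi volterra t] .
  then have "exp (-r * t) * G_path c t = G0 * exp (-a * t)" using W_G_path[OF t] by simp
  then have "G_path c t = exp (r * t) * (G0 * exp (-a * t))"
    by (simp add: exp_minus field_simps)
  then show ?thesis by (simp add: algebra_simps flip: exp_add)
qed

lemma closed_loop_gap:
  assumes cl: "closed_loop A delta rho eps eta tau gam (x0, x1) X c"
  shows "AE t in lborel. t \<ge> 0 \<longrightarrow> c t - habit c t = opt_gap t"
  using closed_loop_gap_feedback[OF cl] by eventually_elim (auto simp: closed_loop_G_path[OF cl] opt_gap_def)

lemma delay_weight_le_one: "v \<le> t \<Longrightarrow> s \<le> 0 \<Longrightarrow> exp (eta * (v - t + s)) \<le> 1"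
  using pos(5) by (simp add: mult_nonneg_nonpos)

lemma set_integrable_delay_window:
  assumes "L1loc c" "0 \<le> w" "w \<le> t"
  shows "set_integrable lborel {w..t} (\<lambda>v. exp (eta * (v - t + s)) * c v)"
  by (rule set_integrable_continuous_mult[OF set_integrable_subset[OF L1loc_set_integrable[OF assms(1), of t]]])
     (use assms in \<open>auto intro!: continuous_intros\<close>)

lemma set_integrable_neg_part:
  assumes "L1loc c" "0 \<le> T"
  shows "set_integrable lborel {0..T} (\<lambda>u. max 0 (- c u))"
proof -
  have "integrable lborel (\<lambda>u. max 0 (- (indicator {0..T} u * c u)))"
    using L1loc_set_integrable[OF assms] by (auto simp: set_integrable_def)
  also have "(\<lambda>u. max 0 (- (indicator {0..T} u * c u))) = (\<lambda>u. indicator {0..T} u * max 0 (- c u))"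
    by (auto simp: fun_eq_iff indicator_def)
  finally show ?thesis by (simp add: set_integrable_def)
qed

lemma delay_part_nonneg:
  assumes "AE v in lborel. v \<ge> 0 \<longrightarrow> c v \<ge> 0"
  shows "0 \<le> (LINT v:{max 0 (t - s - tau)..t}|lborel. c v * exp (eta * (v - t + s)))"
  unfolding set_lebesgue_integral_def real_scaleR_def
  by (rule integral_nonneg_AE) (use assms in \<open>eventually_elim, auto simp: indicator_def\<close>)

lemma stX1_nonneg:
  assumes "AE v in lborel. v \<ge> 0 \<longrightarrow> c v \<ge> 0" and t: "0 \<le> t" and s: "s \<in> {-tau..0}"
  shows "0 \<le> stX1 eps eta tau x1 c t s"
proof -
  have "0 \<le> (if s - t \<ge> -tau then x1 (s - t) else 0)" using x1_nonneg[of "s - t"] s t by auto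
  then show ?thesis using delay_part_nonneg[OF assms(1), of t s] pos(4) by (simp add: stX1_def)
qed

lemma habit_ge_neg_part:
  assumes L: "L1loc c" and u: "0 \<le> u"
  shows "- eps * (LINT v:{0..u}|lborel. max 0 (- c v)) \<le> habit c u"
proof -
  define w where "w = max 0 (u - 0 - tau)"
  have w: "0 \<le> w" "w \<le> u" using u pos by (auto simp: w_def)
  have "-(LINT v:{0..u}|lborel. max 0 (- c v)) = (\<integral>v. indicator {0..u} v * (- max 0 (- c v)) \<partial>lborel)"
    by (simp add: set_lebesgue_integral_def)
  also have "\<dots> \<le> (\<integral>v. indicator {w..u} v * (c v * exp (eta * (v - u + 0))) \<partial>lborel)"
  proof (rule integral_mono)
    show "integrable lborel (\<lambda>v. indicator {0..u} v * - max 0 (- c v))"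
      using set_integrable_neg_part[OF L u] by (simp add: set_integrable_def)
    show "integrable lborel (\<lambda>v. indicator {w..u} v * (c v * exp (eta * (v - u + 0))))"
      using set_integrable_delay_window[OF L w, of 0] by (simp add: set_integrable_def mult.commute)
    fix v
    show "indicator {0..u} v * - max 0 (- c v) \<le> indicator {w..u} v * (c v * exp (eta * (v - u + 0)))"
    proof (cases "w \<le> v \<and> v \<le> u")
      case True
      have e: "exp (eta * (v - u + 0)) \<le> 1" "0 < exp (eta * (v - u + 0))"
        using delay_weight_le_one[of v u 0] True by auto
      have "- max 0 (- c v) \<le> - max 0 (- c v) * exp (eta * (v - u + 0))"
        using e by (simp add: mult_left_le)
      also have "\<dots> \<le> c v * exp (eta * (v - u + 0))"
        using e by (intro mult_right_mono) auto
      finally have "- max 0 (- c v) \<le> c v * exp (eta * (v - u + 0))" .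
      then show ?thesis using True w by (auto simp: indicator_def)
    qed (auto simp: indicator_def)
  qed
  finally have "eps * (-(LINT v:{0..u}|lborel. max 0 (- c v)))
      \<le> eps * (LINT v:{w..u}|lborel. c v * exp (eta * (v - u + 0)))"
    using pos(4) by (intro mult_left_mono) (simp_all add: set_lebesgue_integral_def)
  moreover have "habit c u = (if 0 - u \<ge> -tau then x1 (0 - u) else 0)
      + eps * (LINT v:{w..u}|lborel. c v * exp (eta * (v - u + 0)))"
    by (simp add: habit_def stX1_def w_def)
  moreover have "0 \<le> (if 0 - u \<ge> -tau then x1 (0 - u) else 0)" using x1_nonneg[of "0 - u"] u by auto
  ultimately show ?thesis by simp
qed

lemma closed_loop_control_nonneg:
  assumes cl: "closed_loop A delta rho eps eta tau gam (x0, x1) X c"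
  shows "AE t in lborel. t \<ge> 0 \<longrightarrow> c t \<ge> 0"
proof -
  have L: "L1loc c" using cl by (simp add: closed_loop_def)
  \<comment> \<open>Since c - habit c > 0, the negative part of c is bounded by eps times its own integral.\<close>
  have "AE u in lborel. u \<ge> 0 \<longrightarrow> max 0 (- c u) = 0"
  proof (rule gronwall_AE_zero[OF set_integrable_neg_part[OF L] _ less_imp_le[OF pos(4)]])
    show "AE u in lborel. 0 \<le> u \<longrightarrow> 0 \<le> max 0 (- c u) \<and> max 0 (- c u) \<le> eps * (LINT v:{0..u}|lborel. max 0 (- c v))"
      using closed_loop_gap[OF cl]
    proof eventually_elim
      case (elim u)
      show ?case
      proof (intro impI conjI)
        assume u: "0 \<le> u"
        have "0 \<le> (LINT v:{0..u}|lborel. max 0 (- c v))"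
          unfolding set_lebesgue_integral_def by (intro Bochner_Integration.integral_nonneg) auto
        then have "0 \<le> eps * (LINT v:{0..u}|lborel. max 0 (- c v))" using pos(4) by simp
        moreover have "- c u < eps * (LINT v:{0..u}|lborel. max 0 (- c v))"
          using habit_ge_neg_part[OF L u] elim u opt_gap_pos[of u] by simp
        ultimately show "max 0 (- c u) \<le> eps * (LINT v:{0..u}|lborel. max 0 (- c v))" by simp
      qed simp
    qed
  qed
  then show ?thesis by eventually_elim auto
qed

lemma closed_loop_X0_nonneg:
  assumes cl: "closed_loop A delta rho eps eta tau gam (x0, x1) X c" and t: "0 \<le> t"
  shows "0 \<le> stX0 A delta x0 c t"
proof -
  have "0 \<le> (LINT s:{-tau..0}|lborel. stX1 eps eta tau x1 c t s * exp (r * s))"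
    unfolding set_lebesgue_integral_def real_scaleR_def
    using stX1_nonneg[OF closed_loop_control_nonneg[OF cl] t]
    by (intro Bochner_Integration.integral_nonneg) (auto simp: indicator_def)
  moreover have "0 < G_path c t" using closed_loop_G_path[OF cl t] G0_pos by simp
  ultimately have "0 < stX0 A delta x0 c t * kappa0 A delta eps eta tau"
    using G_path_eq[of c t] by linarith
  then show ?thesis using kappa0_positive by (simp add: zero_less_mult_iff)
qed

lemma closed_loop_admissible:
  assumes cl: "closed_loop A delta rho eps eta tau gam (x0, x1) X c"
  shows "c \<in> Cad A delta eps eta tau (x0, x1)"
  unfolding Cad_def
proof (intro CollectI conjI allI impI)
  show "L1loc c" using cl by (simp add: closed_loop_def)
  show "0 \<le> stX0 A delta (fst (x0, x1)) c t" if "0 \<le> t" for t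
    using closed_loop_X0_nonneg[OF cl that] by simp
  show "AE t in lborel. 0 \<le> t \<longrightarrow> 0 \<le> c t \<and> stX1 eps eta tau (snd (x0, x1)) c t 0 \<le> c t"
    using closed_loop_control_nonneg[OF cl] closed_loop_gap[OF cl]
  proof eventually_elim
    case (elim t)
    then show ?case using opt_gap_pos[of t] by (auto simp: habit_def)
  qed
qed

section \<open>The budget constraint\<close>

lemma admissible_nonneg:
  assumes "c \<in> Cad A delta eps eta tau (x0, x1)"
  shows "AE v in lborel. v \<ge> 0 \<longrightarrow> c v \<ge> 0"
  using admissibleD(3)[OF assms] by eventually_elim auto

lemma disc_gap_le_X1_integral:
  assumes cad: "c \<in> Cad A delta eps eta tau (x0, x1)" and t: "0 \<le> t"
  shows "(LINT u:{0..t}|lborel. exp (-r * u) * (c u - habit c u))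
    \<le> G0 + exp (-r * t) * (LINT s:{-tau..0}|lborel. stX1 eps eta tau x1 c t s * exp (r * s))"
proof -
  have "0 \<le> stX0 A delta x0 c t * kappa0 A delta eps eta tau"
    using admissibleD(2)[OF cad t] kappa0_positive by simp
  then have "- (LINT s:{-tau..0}|lborel. stX1 eps eta tau x1 c t s * exp (r * s)) \<le> G_path c t"
    using G_path_eq[of c t] by simp
  then have "exp (-r * t) * - (LINT s:{-tau..0}|lborel. stX1 eps eta tau x1 c t s * exp (r * s))
      \<le> exp (-r * t) * G_path c t"
    by (intro mult_left_mono) auto
  then show ?thesis using discounted_G_path[OF admissibleD(1)[OF cad] t] by (simp add: algebra_simps)
qed

text \<open>Once t exceeds the delay, X1(t) only remembers the control on the window [t - k, t].\<close>

lemma stX1_le_window: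
  assumes cad: "c \<in> Cad A delta eps eta tau (x0, x1)" and k: "k > tau" and t: "t \<ge> k"
    and s: "s \<in> {-tau..0}"
  shows "stX1 eps eta tau x1 c t s \<le> eps * (LINT v:{t-k..t}|lborel. c v)"
proof -
  have L: "L1loc c" and cnn: "AE v in lborel. v \<ge> 0 \<longrightarrow> c v \<ge> 0"
    using admissibleD(1)[OF cad] admissible_nonneg[OF cad] .
  have t0: "0 \<le> t" "0 \<le> t - k" using t k pos by auto
  define w where "w = max 0 (t - s - tau)"
  have w: "t - k \<le> w" "w \<le> t" using s t k by (auto simp: w_def)
  have "(LINT v:{w..t}|lborel. c v * exp (eta * (v - t + s))) \<le> (LINT v:{t-k..t}|lborel. c v)"
    unfolding set_lebesgue_integral_def real_scaleR_def
  proof (rule integral_mono_AE)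
    show "integrable lborel (\<lambda>v. indicator {w..t} v * (c v * exp (eta * (v - t + s))))"
      using set_integrable_delay_window[OF L _ w(2), of s] w t0
      by (simp add: set_integrable_def mult.commute)
    show "integrable lborel (\<lambda>v. indicator {t-k..t} v * c v)"
      using set_integrable_subset[OF L1loc_set_integrable[OF L t0(1)], of "{t-k..t}"] t0
      by (simp add: set_integrable_def)
    show "AE v in lborel. indicator {w..t} v * (c v * exp (eta * (v - t + s))) \<le> indicator {t-k..t} v * c v"
      using cnn
    proof eventually_elim
      case (elim v)
      show ?case
      proof (cases "w \<le> v \<and> v \<le> t")
        case True
        have "c v * exp (eta * (v - t + s)) \<le> c v * 1"
          using delay_weight_le_one[of v t s] elim True w t0 s by (intro mult_left_mono) auto
        then show ?thesis using True w by (auto simp: indicator_def)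
      qed (use elim t0 in \<open>auto simp: indicator_def\<close>)
    qed
  qed
  moreover have "\<not> (s - t \<ge> -tau)" using s t k by auto
  ultimately show ?thesis using pos(4) by (simp add: stX1_def w_def)
qed

lemma X1_integral_le_window:
  assumes cad: "c \<in> Cad A delta eps eta tau (x0, x1)" and k: "k > tau" and t: "t \<ge> k"
  shows "(LINT s:{-tau..0}|lborel. stX1 eps eta tau x1 c t s * exp (r * s))
    \<le> eps * (LINT v:{t-k..t}|lborel. c v) * tau"
proof -
  have t0: "0 \<le> t" using t k pos by auto
  have "(LINT s:{-tau..0}|lborel. stX1 eps eta tau x1 c t s * exp (r * s))
      \<le> (\<integral>s. indicator {-tau..0} s * (eps * (LINT v:{t-k..t}|lborel. c v)) \<partial>lborel)"
    unfolding set_lebesgue_integral_def[of _ "{-tau..0}"] real_scaleR_def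
  proof (rule integral_mono)
    show "integrable lborel (\<lambda>s. indicator {-tau..0} s * (stX1 eps eta tau x1 c t s * exp (r * s)))"
      using set_integrable_X1[OF admissibleD(1)[OF cad] t0] by (simp add: set_integrable_def)
    have "integrable lborel (\<lambda>s. (eps * (LINT v:{t-k..t}|lborel. c v)) * indicator {-tau..0} s)"
      by (intro integrable_mult_right integrable_real_indicator) (auto simp: emeasure_lborel_Icc_eq)
    then show "integrable lborel (\<lambda>s. indicator {-tau..0} s * (eps * (LINT v:{t-k..t}|lborel. c v)))"
      by (simp add: mult.commute)
    fix s
    show "indicator {-tau..0} s * (stX1 eps eta tau x1 c t s * exp (r * s))
        \<le> indicator {-tau..0} s * (eps * (LINT v:{t-k..t}|lborel. c v))"
    proof (cases "s \<in> {-tau..0}")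
      case True
      have "exp (r * s) \<le> 1" using True r_pos mult_nonneg_nonpos[of r s] by simp
      then have "stX1 eps eta tau x1 c t s * exp (r * s) \<le> stX1 eps eta tau x1 c t s * 1"
        using stX1_nonneg[OF admissible_nonneg[OF cad] t0 True] by (intro mult_left_mono) auto
      then show ?thesis using stX1_le_window[OF cad k t True] True by simp
    qed simp
  qed
  also have "\<dots> = eps * (LINT v:{t-k..t}|lborel. c v) * tau" using pos by simp
  finally show ?thesis .
qed

lemma disc_window_le_disc_cons_diff:
  assumes cad: "c \<in> Cad A delta eps eta tau (x0, x1)" and k: "k \<ge> 0" and t: "t \<ge> k"
  shows "exp (-r * t) * (LINT v:{t-k..t}|lborel. c v) \<le> disc_cons c t - disc_cons c (t - k)"
proof -
  have L: "L1loc c" using admissibleD(1)[OF cad] .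
  have t0: "0 \<le> t" "0 \<le> t - k" using t k by auto
  have eci: "set_integrable lborel {0..t} (\<lambda>u. exp (-r * u) * c u)"
    by (rule set_integrable_disc_control[OF L t0(1)])
  have sub: "set_integrable lborel {a'..b'} (\<lambda>u. exp (-r * u) * c u)" if "0 \<le> a'" "b' \<le> t" for a' b'
    by (rule set_integrable_subset[OF eci]) (use that in auto)
  have "{0..t} = {0..t-k} \<union> {t-k..t}" using t0 k by auto
  then have "disc_cons c t = (LINT u:{0..t-k} \<union> {t-k..t}|lborel. exp (-r * u) * c u)"
    by (simp add: disc_cons_def)
  also have "\<dots> = disc_cons c (t - k) + (LINT u:{t-k..t}|lborel. exp (-r * u) * c u)"
    unfolding disc_cons_def
  proof (rule set_integral_Un_AE)
    show "AE x in lborel. \<not> (x \<in> {0..t - k} \<and> x \<in> {t - k..t})"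
      using AE_lborel_singleton[of "t - k"] by eventually_elim auto
  qed (use sub[of 0 "t - k"] sub[of "t - k" t] t0 k in auto)
  finally have split: "disc_cons c t = disc_cons c (t - k) + (LINT u:{t-k..t}|lborel. exp (-r * u) * c u)" .
  have "exp (-r * t) * (LINT v:{t-k..t}|lborel. c v) = (\<integral>u. exp (-r * t) * (indicator {t-k..t} u * c u) \<partial>lborel)"
    by (simp add: set_lebesgue_integral_def)
  also have "\<dots> = (\<integral>u. indicator {t-k..t} u * (exp (-r * t) * c u) \<partial>lborel)"
    by (simp add: mult.left_commute)
  also have "\<dots> \<le> (\<integral>u. indicator {t-k..t} u * (exp (-r * u) * c u) \<partial>lborel)"
  proof (rule integral_mono_AE)
    have "integrable lborel (\<lambda>u. exp (-r * t) * (indicator {t-k..t} u * c u))"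
      using set_integrable_subset[OF L1loc_set_integrable[OF L t0(1)], of "{t-k..t}"] t0
      by (simp add: set_integrable_def)
    then show "integrable lborel (\<lambda>u. indicator {t-k..t} u * (exp (-r * t) * c u))"
      by (simp add: mult.left_commute)
    show "integrable lborel (\<lambda>u. indicator {t-k..t} u * (exp (-r * u) * c u))"
      using sub[of "t-k" t] t0 by (simp add: set_integrable_def)
    show "AE u in lborel. indicator {t-k..t} u * (exp (-r * t) * c u) \<le> indicator {t-k..t} u * (exp (-r * u) * c u)"
      using admissible_nonneg[OF cad]
    proof eventually_elim
      case (elim u)
      show ?case
      proof (cases "t - k \<le> u \<and> u \<le> t")
        case True
        have "exp (-r * t) \<le> exp (-r * u)" using True r_pos by (simp add: mult_left_mono)
        moreover have "0 \<le> c u" using elim True t0 by auto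
        ultimately show ?thesis using True by (simp add: mult_right_mono)
      qed simp
    qed
  qed
  finally show ?thesis using split by (simp add: set_lebesgue_integral_def)
qed

lemma disc_gap_tail_bound:
  assumes cad: "c \<in> Cad A delta eps eta tau (x0, x1)" and k: "k > tau" and t: "t \<ge> k"
  shows "(LINT u:{0..t}|lborel. exp (-r * u) * (c u - habit c u))
    \<le> G0 + eps * tau * (disc_cons c t - disc_cons c (t - k))"
proof -
  define Ct where "Ct = (LINT v:{t-k..t}|lborel. c v)"
  have t0: "0 \<le> t" using t k pos by auto
  have "exp (-r * t) * (LINT s:{-tau..0}|lborel. stX1 eps eta tau x1 c t s * exp (r * s))
      \<le> exp (-r * t) * (eps * Ct * tau)"
    using X1_integral_le_window[OF cad k t] by (simp add: Ct_def)
  also have "\<dots> = eps * tau * (exp (-r * t) * Ct)" by simp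
  also have "\<dots> \<le> eps * tau * (disc_cons c t - disc_cons c (t - k))"
    using disc_window_le_disc_cons_diff[OF cad _ t] k pos by (intro mult_left_mono) (auto simp: Ct_def)
  finally show ?thesis using disc_gap_le_X1_integral[OF cad t0] by linarith
qed

lemma disc_cons_le_x0:
  assumes "c \<in> Cad A delta eps eta tau (x0, x1)" "0 \<le> t"
  shows "disc_cons c t \<le> x0"
proof -
  have "0 \<le> exp (-r * t) * stX0 A delta x0 c t" using admissibleD(2)[OF assms] by simp
  then show ?thesis using discounted_X0[of t c] by simp
qed

lemma disc_cons_mono:
  assumes cad: "c \<in> Cad A delta eps eta tau (x0, x1)" and "0 \<le> s" "s \<le> t"
  shows "disc_cons c s \<le> disc_cons c t"
proof -
  have i: "integrable lborel (\<lambda>u. indicator {0..T} u * (exp (-r * u) * c u))" if "0 \<le> T" for T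
    using set_integrable_disc_control[OF admissibleD(1)[OF cad] that] by (simp add: set_integrable_def)
  show ?thesis
    unfolding disc_cons_def set_lebesgue_integral_def real_scaleR_def
  proof (rule integral_mono_AE[OF i i])
    show "AE x in lborel. indicator {0..s} x * (exp (-r * x) * c x) \<le> indicator {0..t} x * (exp (-r * x) * c x)"
      using admissible_nonneg[OF cad] by eventually_elim (use assms in \<open>auto simp: indicator_def\<close>)
  qed (use assms in auto)
qed

text \<open>On [0, t] the discounted gap is at most G0 plus a window increment of the bounded increasing
  function disc_cons, and such increments vanish as t tends to infinity.\<close>

lemma disc_gap_integral_le_G0:
  assumes cad: "c \<in> Cad A delta eps eta tau (x0, x1)"
  shows "(LINT u:{0..real j}|lborel. exp (-r * u) * (c u - habit c u)) \<le> G0"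
proof -
  define aa where "aa = (\<lambda>j::nat. LINT u:{0..real j}|lborel. exp (-r * u) * (c u - habit c u))"
  have gi: "integrable lborel (\<lambda>u. indicator {0..T} u * (exp (-r * u) * (c u - habit c u)))" if "0 \<le> T" for T
    using set_integrable_disc_gap[OF admissibleD(1)[OF cad] that] by (simp add: set_integrable_def)
  have aa_mono: "aa i \<le> aa j" if "i \<le> j" for i j
    unfolding aa_def set_lebesgue_integral_def real_scaleR_def
  proof (rule integral_mono_AE[OF gi gi])
    show "AE x in lborel. indicator {0..real i} x * (exp (-r * x) * (c x - habit c x))
        \<le> indicator {0..real j} x * (exp (-r * x) * (c x - habit c x))"
      using admissibleD(3)[OF cad] by eventually_elim (use that in \<open>auto simp: indicator_def\<close>)
  qed auto
  have "incseq (\<lambda>m. disc_cons c (real m))"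
    by (rule incseq_SucI) (rule disc_cons_mono[OF cad], auto)
  then obtain Lc where Lc: "(\<lambda>m. disc_cons c (real m)) \<longlonglongrightarrow> Lc"
    using incseq_convergent disc_cons_le_x0[OF cad] by (metis of_nat_0_le_iff)
  define K where "K = nat \<lceil>tau\<rceil> + 1"
  have K: "real K > tau" unfolding K_def by linarith
  have bnd: "aa (m + K) \<le> G0 + eps * tau * (disc_cons c (real (m + K)) - disc_cons c (real m))" for m
    using disc_gap_tail_bound[OF cad K, of "real (m + K)"] by (simp add: aa_def)
  have lim: "(\<lambda>m. G0 + eps * tau * (disc_cons c (real (m + K)) - disc_cons c (real m))) \<longlonglongrightarrow> G0 + eps * tau * (Lc - Lc)"
    using LIMSEQ_ignore_initial_segment[OF Lc, of K] by (intro tendsto_intros Lc) simp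
  have "aa j \<le> G0 + eps * tau * (Lc - Lc)"
  proof (rule LIMSEQ_le_const[OF lim], intro exI[of _ j] allI impI)
    fix n assume "j \<le> n"
    then have "aa j \<le> aa (n + K)" by (intro aa_mono) simp
    then show "aa j \<le> G0 + eps * tau * (disc_cons c (real (n + K)) - disc_cons c (real n))"
      using bnd[of n] by simp
  qed
  then show ?thesis by (simp add: aa_def)
qed

lemma nn_integral_disc_surplus_le:
  assumes cad: "c \<in> Cad A delta eps eta tau (x0, x1)"
  shows "(\<integral>\<^sup>+t. indicator {0..} t * ennreal (exp (-r * t) * surplus c t) \<partial>lborel) \<le> ennreal G0"
proof -
  have L: "L1loc c" using admissibleD(1)[OF cad] .
  define f where "f = (\<lambda>i x. indicator {0..real i} x * ennreal (exp (-r * x) * surplus c x))"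
  have f_int: "integral\<^sup>N lborel (f j) \<le> ennreal G0" for j
  proof -
    have gi: "integrable lborel (\<lambda>u. indicator {0..real j} u * (exp (-r * u) * (c u - habit c u)))"
      using set_integrable_disc_gap[OF L, of "real j"] by (simp add: set_integrable_def)
    have "integral\<^sup>N lborel (f j) = (\<integral>\<^sup>+t. ennreal (indicator {0..real j} t * (exp (-r * t) * (c t - habit c t))) \<partial>lborel)"
      unfolding f_def
      by (rule nn_integral_cong_AE) (use admissibleD(3)[OF cad] in \<open>eventually_elim, auto simp: surplus_def indicator_def\<close>)
    also have "\<dots> = ennreal (\<integral>t. indicator {0..real j} t * (exp (-r * t) * (c t - habit c t)) \<partial>lborel)"
      by (rule nn_integral_eq_integral[OF gi]) (use admissibleD(3)[OF cad] in \<open>eventually_elim, auto simp: indicator_def\<close>)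
    also have "\<dots> \<le> ennreal G0"
      using disc_gap_integral_le_G0[OF cad, of j] by (intro ennreal_leI) (simp add: set_lebesgue_integral_def)
    finally show ?thesis .
  qed
  have fm: "f i \<in> borel_measurable lborel" for i
  proof -
    have "(\<lambda>x. ennreal (indicator {0..real i} x * exp (-r * x) * (indicator {0..} x * surplus c x))) \<in> borel_measurable lborel"
      using borel_measurable_surplus[OF L] by measurable
    also have "(\<lambda>x. ennreal (indicator {0..real i} x * exp (-r * x) * (indicator {0..} x * surplus c x))) = f i"
      by (auto simp: fun_eq_iff f_def indicator_def)
    finally show ?thesis .
  qed
  have f_inc: "incseq f"
    by (rule incseq_SucI) (auto simp: f_def le_fun_def indicator_def)
  have f_sup: "(SUP i. f i x) = indicator {0..} x * ennreal (exp (-r * x) * surplus c x)" for x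
  proof (cases "x \<ge> 0")
    case True
    obtain N where N: "x \<le> real N" using real_arch_simple by blast
    show ?thesis
    proof (rule antisym)
      show "(SUP i. f i x) \<le> indicator {0..} x * ennreal (exp (-r * x) * surplus c x)"
        by (rule SUP_least) (auto simp: f_def indicator_def)
      have "f N x = indicator {0..} x * ennreal (exp (-r * x) * surplus c x)"
        using True N by (simp add: f_def indicator_def)
      then show "indicator {0..} x * ennreal (exp (-r * x) * surplus c x) \<le> (SUP i. f i x)"
        by (metis SUP_upper UNIV_I)
    qed
  qed (simp add: f_def indicator_def)
  have "(\<integral>\<^sup>+t. indicator {0..} t * ennreal (exp (-r * t) * surplus c t) \<partial>lborel) = (\<integral>\<^sup>+t. (SUP i. f i t) \<partial>lborel)"
    by (simp add: f_sup)
  also have "\<dots> = (SUP i. integral\<^sup>N lborel (f i))"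
    by (rule nn_integral_monotone_convergence_SUP[OF f_inc fm])
  also have "\<dots> \<le> ennreal G0" by (rule SUP_least) (use f_int in auto)
  finally show ?thesis .
qed

section \<open>Concavity and optimality\<close>

definition "p = 1 - gam"
definition "shadow_price = (a * G0) powr (- gam)"
definition "shadow_cost f t = indicator {0..} t * ennreal (shadow_price * exp (-r * t) * f t)"
definition "pos_util c = (\<integral>\<^sup>+t. indicator {0..} t * ennreal (surplus c t powr p / p * exp (-rho * t)) \<partial>lborel)"
definition "pos_value = (a * G0) powr p / p / a"
definition "neg_util c = (\<integral>\<^sup>+t. indicator {0..} t *
    (if surplus c t = 0 then \<infinity> else ennreal (surplus c t powr p / (gam - 1) * exp (-rho * t))) \<partial>lborel)"
definition "neg_value = (a * G0) powr p / (gam - 1) / a"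

lemma p_props: "p < 1" "p \<noteq> 0" using pos by (auto simp: p_def)
lemma shadow_price_pos: "shadow_price > 0" using a_pos G0_pos by (simp add: shadow_price_def)

lemma gam_mult_a: "gam * a = rho - r * (1 - gam)"
  using pos by (simp add: a_def alpha_def r_def)

lemma opt_gap_marginal_utility: "opt_gap t powr (p - 1) * exp (-rho * t) = shadow_price * exp (-r * t)"
proof -
  have "opt_gap t powr (p - 1) = (a * G0) powr (- gam) * exp ((r - a) * t * (- gam))"
    using a_pos G0_pos by (simp add: opt_gap_def p_def powr_mult exp_powr_real)
  moreover have "(r - a) * t * (- gam) + (-rho * t) = -r * t"
    using gam_mult_a by (simp add: algebra_simps) (metis (no_types) distrib_left mult.commute mult.left_commute mult_minus_left)
  ultimately show ?thesis
    by (simp add: shadow_price_def mult.assoc flip: exp_add)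
qed

lemma opt_gap_utility: "opt_gap t powr p * exp (-rho * t) = (a * G0) powr p * exp (-a * t)"
proof -
  have "opt_gap t powr p = (a * G0) powr p * exp ((r - a) * t * p)"
    using a_pos G0_pos by (simp add: opt_gap_def powr_mult exp_powr_real)
  moreover have "(r - a) * p = rho - a" using gam_mult_a by (simp add: p_def algebra_simps)
  then have "(r - a) * t * p + (-rho * t) = -a * t"
    by (simp add: algebra_simps) (metis mult.commute ring_class.ring_distribs(1) add.commute)
  ultimately show ?thesis by (simp add: mult.assoc flip: exp_add)
qed

lemma nn_integral_opt_gap_utility:
  assumes "k > 0"
  shows "(\<integral>\<^sup>+t. indicator {0..} t * ennreal (opt_gap t powr p / k * exp (-rho * t)) \<partial>lborel)
    = ennreal ((a * G0) powr p / k / a)"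
proof -
  have "opt_gap t powr p / k * exp (-rho * t) = (a * G0) powr p / k * exp (-a * t)" for t
    using opt_gap_utility[of t] by (simp add: field_simps)
  then show ?thesis using nn_integral_exp_decay[of "(a * G0) powr p / k" a] assms a_pos by simp
qed

lemma nn_integral_shadow_cost_opt_gap: "integral\<^sup>N lborel (shadow_cost opt_gap) = ennreal (shadow_price * G0)"
proof -
  have eq: "shadow_price * exp (-r * t) * opt_gap t = (shadow_price * a * G0) * exp (-a * t)" for t
    by (simp add: opt_gap_def algebra_simps flip: exp_add)
  show ?thesis
    unfolding shadow_cost_def eq
    using nn_integral_exp_decay[of "shadow_price * a * G0" a] shadow_price_pos a_pos G0_pos by simp
qed

lemma borel_measurable_shadow_cost_opt_gap: "shadow_cost opt_gap \<in> borel_measurable lborel"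
proof -
  have "(\<lambda>t. ennreal (indicator {0..} t * (shadow_price * exp (-r * t) * opt_gap t))) \<in> borel_measurable lborel"
    unfolding opt_gap_def by measurable
  then show ?thesis
    by (rule measurable_cong[THEN iffD1, rotated]) (auto simp: shadow_cost_def indicator_def)
qed

lemma borel_measurable_shadow_cost_surplus:
  assumes "L1loc c"
  shows "shadow_cost (surplus c) \<in> borel_measurable lborel"
proof -
  note [measurable] = borel_measurable_surplus[OF assms]
  have "(\<lambda>t. ennreal (shadow_price * exp (-r * t) * (indicator {0..} t * surplus c t))) \<in> borel_measurable lborel"
    by measurable
  then show ?thesis
    by (rule measurable_cong[THEN iffD1, rotated]) (auto simp: shadow_cost_def indicator_def)
qed

lemma nn_integral_shadow_cost_surplus_le:
  assumes cad: "c \<in> Cad A delta eps eta tau (x0, x1)"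
  shows "integral\<^sup>N lborel (shadow_cost (surplus c)) \<le> ennreal (shadow_price * G0)"
proof -
  note [measurable] = borel_measurable_surplus[OF admissibleD(1)[OF cad]]
  have "integral\<^sup>N lborel (shadow_cost (surplus c))
     = (\<integral>\<^sup>+t. ennreal shadow_price * (indicator {0..} t * ennreal (exp (-r * t) * surplus c t)) \<partial>lborel)"
    using shadow_price_pos surplus_nonneg[of c]
    by (intro nn_integral_cong) (simp add: shadow_cost_def ennreal_mult mult.assoc mult.left_commute)
  also have "\<dots> = ennreal shadow_price * (\<integral>\<^sup>+t. indicator {0..} t * ennreal (exp (-r * t) * surplus c t) \<partial>lborel)"
  proof (rule nn_integral_cmult)
    have "(\<lambda>t. ennreal (exp (-r * t) * (indicator {0..} t * surplus c t))) \<in> borel_measurable lborel" by measurable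
    then show "(\<lambda>t. indicator {0..} t * ennreal (exp (-r * t) * surplus c t)) \<in> borel_measurable lborel"
      by (rule measurable_cong[THEN iffD1, rotated]) (auto simp: indicator_def)
  qed
  also have "\<dots> \<le> ennreal shadow_price * ennreal G0"
    using nn_integral_disc_surplus_le[OF cad] by (intro mult_left_mono) auto
  also have "\<dots> = ennreal (shadow_price * G0)" using shadow_price_pos G0_pos by (simp add: ennreal_mult)
  finally show ?thesis .
qed

text \<open>The slope of the utility at the optimal gap, discounted by rho, is the shadow price
  discounted by r; integrating this tangent inequality against the budget constraint bounds J0.\<close>

lemma utility_tangent_ineq:
  assumes D: "D \<ge> 0" "D > 0 \<or> p > 0"
  shows "D powr p / p * exp (-rho * t) + shadow_price * exp (-r * t) * opt_gap t
      \<le> opt_gap t powr p / p * exp (-rho * t) + shadow_price * exp (-r * t) * D"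
    and "D \<noteq> opt_gap t \<Longrightarrow> D powr p / p * exp (-rho * t) + shadow_price * exp (-r * t) * opt_gap t
      < opt_gap t powr p / p * exp (-rho * t) + shadow_price * exp (-r * t) * D"
proof -
  have x: "D > 0 \<or> (D = 0 \<and> p > 0)" using D by auto
  have e: "exp (-rho * t) > 0" by simp
  have eq: "opt_gap t powr p / p * exp (-rho * t) + opt_gap t powr (p - 1) * (D - opt_gap t) * exp (-rho * t)
     + shadow_price * exp (-r * t) * opt_gap t = opt_gap t powr p / p * exp (-rho * t) + shadow_price * exp (-r * t) * D"
  proof -
    have "opt_gap t powr (p - 1) * (D - opt_gap t) * exp (-rho * t) = (opt_gap t powr (p - 1) * exp (-rho * t)) * (D - opt_gap t)"
      by simp
    also have "\<dots> = shadow_price * exp (-r * t) * (D - opt_gap t)" by (simp only: opt_gap_marginal_utility)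
    finally show ?thesis by (simp add: algebra_simps)
  qed
  have "D powr p / p * exp (-rho * t) \<le> (opt_gap t powr p / p + opt_gap t powr (p - 1) * (D - opt_gap t)) * exp (-rho * t)"
    using powr_div_below_tangent[OF p_props opt_gap_pos x] e by (intro mult_right_mono) auto
  then show "D powr p / p * exp (-rho * t) + shadow_price * exp (-r * t) * opt_gap t
      \<le> opt_gap t powr p / p * exp (-rho * t) + shadow_price * exp (-r * t) * D"
    using eq by (simp add: algebra_simps)
  assume ne: "D \<noteq> opt_gap t"
  have "D powr p / p * exp (-rho * t) < (opt_gap t powr p / p + opt_gap t powr (p - 1) * (D - opt_gap t)) * exp (-rho * t)"
    using powr_div_below_tangent_strict[OF p_props opt_gap_pos x ne] e by (intro mult_strict_right_mono) auto
  then show "D powr p / p * exp (-rho * t) + shadow_price * exp (-r * t) * opt_gap t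
      < opt_gap t powr p / p * exp (-rho * t) + shadow_price * exp (-r * t) * D"
    using eq by (simp add: algebra_simps)
qed

lemma pos_util_le_value:
  assumes g: "gam < 1" and cad: "c \<in> Cad A delta eps eta tau (x0, x1)"
  shows "pos_util c \<le> ennreal pos_value"
    and "pos_util c = ennreal pos_value \<Longrightarrow> AE t in lborel. t \<ge> 0 \<longrightarrow> surplus c t = opt_gap t"
proof -
  have pp: "p > 0" using g by (simp add: p_def)
  have L: "L1loc c" using admissibleD(1)[OF cad] .
  note [measurable] = borel_measurable_surplus[OF L]
  define P where "P = (\<lambda>t. indicator {0..} t * ennreal (surplus c t powr p / p * exp (-rho * t)))"
  define Q where "Q = (\<lambda>t. indicator {0..} t * ennreal (opt_gap t powr p / p * exp (-rho * t)))"
  have "(\<lambda>t. ennreal ((indicator {0..} t * surplus c t) powr p / p * exp (-rho * t))) \<in> borel_measurable lborel"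
    by measurable
  then have Pm: "P \<in> borel_measurable lborel"
    by (rule measurable_cong[THEN iffD1, rotated]) (auto simp: P_def indicator_def)
  have "(\<lambda>t. ennreal (indicator {0..} t * (opt_gap t powr p / p * exp (-rho * t)))) \<in> borel_measurable lborel"
    unfolding opt_gap_def by measurable
  then have Qm: "Q \<in> borel_measurable lborel"
    by (rule measurable_cong[THEN iffD1, rotated]) (auto simp: Q_def indicator_def)
  have sums: "P t + shadow_cost opt_gap t = indicator {0..} t * ennreal (surplus c t powr p / p * exp (-rho * t)
        + shadow_price * exp (-r * t) * opt_gap t)"
      "Q t + shadow_cost (surplus c) t = indicator {0..} t * ennreal (opt_gap t powr p / p * exp (-rho * t)
        + shadow_price * exp (-r * t) * surplus c t)" for t
    using pp shadow_price_pos opt_gap_pos[of t] surplus_nonneg[of c t]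
    by (auto simp: P_def Q_def shadow_cost_def indicator_def)
  have le: "P t + shadow_cost opt_gap t \<le> Q t + shadow_cost (surplus c) t" for t
    unfolding sums using utility_tangent_ineq(1)[OF surplus_nonneg, of c t] pp
    by (cases "t \<ge> 0") (auto simp: indicator_def intro!: ennreal_leI)
  note cmp = nn_integral_le_of_budget[OF Pm Qm borel_measurable_shadow_cost_opt_gap
      borel_measurable_shadow_cost_surplus[OF L] le nn_integral_shadow_cost_opt_gap
      nn_integral_shadow_cost_surplus_le[OF cad]]
  have intP: "integral\<^sup>N lborel P = pos_util c" by (simp add: P_def pos_util_def)
  have intQ: "integral\<^sup>N lborel Q = ennreal pos_value"
    using nn_integral_opt_gap_utility[OF pp] by (simp add: Q_def pos_value_def)
  show "pos_util c \<le> ennreal pos_value" using cmp(1) intP intQ by simp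
  assume "pos_util c = ennreal pos_value"
  then have "AE t in lborel. P t + shadow_cost opt_gap t = Q t + shadow_cost (surplus c) t"
    using intP intQ by (intro cmp(2)) auto
  then show "AE t in lborel. t \<ge> 0 \<longrightarrow> surplus c t = opt_gap t"
  proof eventually_elim
    case (elim t)
    show ?case
    proof
      assume t: "t \<ge> 0"
      have "surplus c t powr p / p * exp (-rho * t) + shadow_price * exp (-r * t) * opt_gap t
          = opt_gap t powr p / p * exp (-rho * t) + shadow_price * exp (-r * t) * surplus c t"
        using elim t pp shadow_price_pos opt_gap_pos[of t] surplus_nonneg[of c t] unfolding sums
        by (simp del: ennreal_plus add: ennreal_inj)
      then show "surplus c t = opt_gap t" using utility_tangent_ineq(2)[OF surplus_nonneg, of c t] pp by force
    qed
  qed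
qed

lemma neg_util_ge_value:
  assumes g: "gam > 1" and cad: "c \<in> Cad A delta eps eta tau (x0, x1)"
  shows "ennreal neg_value \<le> neg_util c"
    and "neg_util c = ennreal neg_value \<Longrightarrow> AE t in lborel. t \<ge> 0 \<longrightarrow> surplus c t = opt_gap t"
proof -
  have g1: "gam - 1 > 0" using g by simp
  have divp: "x / p = - (x / (gam - 1))" for x by (simp add: p_def divide_minus_right[symmetric])
  have L: "L1loc c" using admissibleD(1)[OF cad] .
  note [measurable] = borel_measurable_surplus[OF L]
  define P where "P = (\<lambda>t. indicator {0..} t * ennreal (opt_gap t powr p / (gam - 1) * exp (-rho * t)))"
  define Q where "Q = (\<lambda>t. indicator {0..} t *
    (if surplus c t = 0 then \<infinity> else ennreal (surplus c t powr p / (gam - 1) * exp (-rho * t))))"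
  have "(\<lambda>t. ennreal (indicator {0..} t * (opt_gap t powr p / (gam - 1) * exp (-rho * t)))) \<in> borel_measurable lborel"
    unfolding opt_gap_def by measurable
  then have Pm: "P \<in> borel_measurable lborel"
    by (rule measurable_cong[THEN iffD1, rotated]) (auto simp: P_def indicator_def)
  have "(\<lambda>t. if 0 \<le> t then (if indicator {0..} t * surplus c t = 0 then \<infinity>
      else ennreal ((indicator {0..} t * surplus c t) powr p / (gam - 1) * exp (-rho * t))) else 0) \<in> borel_measurable lborel"
    by measurable
  then have Qm: "Q \<in> borel_measurable lborel"
    by (rule measurable_cong[THEN iffD1, rotated]) (auto simp: Q_def indicator_def)
  have P_sum: "P t + shadow_cost opt_gap t = indicator {0..} t * ennreal (opt_gap t powr p / (gam - 1) * exp (-rho * t)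
      + shadow_price * exp (-r * t) * opt_gap t)" for t
    using g1 shadow_price_pos opt_gap_pos[of t] by (auto simp: P_def shadow_cost_def indicator_def)
  have Q_sum: "Q t + shadow_cost (surplus c) t = ennreal (surplus c t powr p / (gam - 1) * exp (-rho * t)
      + shadow_price * exp (-r * t) * surplus c t)" if "t \<ge> 0" "surplus c t \<noteq> 0" for t
    using that g1 shadow_price_pos surplus_nonneg[of c t] by (auto simp: Q_def shadow_cost_def indicator_def)
  have Q_inf: "Q t = \<infinity>" if "t \<ge> 0" "surplus c t = 0" for t using that by (simp add: Q_def)
  have tangent: "opt_gap t powr p / (gam - 1) * exp (-rho * t) + shadow_price * exp (-r * t) * opt_gap t
      \<le> surplus c t powr p / (gam - 1) * exp (-rho * t) + shadow_price * exp (-r * t) * surplus c t"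
    and tangent_strict: "surplus c t \<noteq> opt_gap t \<Longrightarrow> opt_gap t powr p / (gam - 1) * exp (-rho * t) + shadow_price * exp (-r * t) * opt_gap t
      < surplus c t powr p / (gam - 1) * exp (-rho * t) + shadow_price * exp (-r * t) * surplus c t"
    if "t \<ge> 0" "surplus c t > 0" for t
    using utility_tangent_ineq[of "surplus c t" t] that unfolding divp by (simp_all add: algebra_simps)
  have le: "P t + shadow_cost opt_gap t \<le> Q t + shadow_cost (surplus c) t" for t
  proof (cases "t \<ge> 0 \<and> surplus c t \<noteq> 0")
    case True
    then have "surplus c t > 0" using surplus_nonneg[of c t] by simp
    then show ?thesis unfolding P_sum Q_sum[OF True[THEN conjunct1] True[THEN conjunct2]]
      using True tangent[of t] by (auto simp: indicator_def intro!: ennreal_leI)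
  qed (auto simp: Q_inf P_def shadow_cost_def indicator_def)
  note cmp = nn_integral_le_of_budget[OF Pm Qm borel_measurable_shadow_cost_opt_gap
      borel_measurable_shadow_cost_surplus[OF L] le nn_integral_shadow_cost_opt_gap
      nn_integral_shadow_cost_surplus_le[OF cad]]
  have intP: "integral\<^sup>N lborel P = ennreal neg_value"
    using nn_integral_opt_gap_utility[OF g1] by (simp add: P_def neg_value_def)
  have intQ: "integral\<^sup>N lborel Q = neg_util c" by (simp add: Q_def neg_util_def)
  show "ennreal neg_value \<le> neg_util c" using cmp(1) intP intQ by simp
  assume "neg_util c = ennreal neg_value"
  then have "AE t in lborel. P t + shadow_cost opt_gap t = Q t + shadow_cost (surplus c) t"
    using intP intQ by (intro cmp(2)) auto
  then show "AE t in lborel. t \<ge> 0 \<longrightarrow> surplus c t = opt_gap t"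
  proof eventually_elim
    case (elim t)
    show ?case
    proof
      assume t: "t \<ge> 0"
      have ne: "surplus c t \<noteq> 0"
      proof
        assume "surplus c t = 0"
        then show False using elim t Q_inf[of t] P_sum[of t] by (simp add: indicator_def)
      qed
      then have "surplus c t > 0" using surplus_nonneg[of c t] by simp
      moreover have "opt_gap t powr p / (gam - 1) * exp (-rho * t) + shadow_price * exp (-r * t) * opt_gap t
          = surplus c t powr p / (gam - 1) * exp (-rho * t) + shadow_price * exp (-r * t) * surplus c t"
        using elim t g1 shadow_price_pos opt_gap_pos[of t] surplus_nonneg[of c t] unfolding P_sum Q_sum[OF t ne]
        by (simp del: ennreal_plus add: ennreal_inj)
      ultimately show "surplus c t = opt_gap t" using tangent_strict[OF t] by force
    qed
  qed
qed

lemma habit_diff_bound: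
  assumes L: "L1loc c" and L': "L1loc c'" and t: "0 \<le> t"
  shows "\<bar>habit c' t - habit c t\<bar> \<le> eps * (LINT u:{0..t}|lborel. \<bar>c' u - c u\<bar>)"
proof -
  define w where "w = max 0 (t - 0 - tau)"
  have w: "0 \<le> w" "w \<le> t" using t pos by (auto simp: w_def)
  define E where "E = (\<lambda>v. exp (eta * (v - t + 0)))"
  have wi: "set_integrable lborel {w..t} (\<lambda>v. E v * f v)" if "L1loc f" for f
    unfolding E_def by (rule set_integrable_delay_window[OF that w])
  have ei: "set_integrable lborel {0..t} (\<lambda>u. \<bar>c' u - c u\<bar>)"
    by (intro set_integrable_abs set_integral_diff(1) L1loc_set_integrable[OF L' t] L1loc_set_integrable[OF L t])
  have "habit c' t - habit c t = eps * ((LINT v:{w..t}|lborel. c' v * E v) - (LINT v:{w..t}|lborel. c v * E v))"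
    by (simp add: habit_def stX1_def w_def E_def algebra_simps)
  also have "(LINT v:{w..t}|lborel. c' v * E v) - (LINT v:{w..t}|lborel. c v * E v)
      = (LINT v:{w..t}|lborel. c' v * E v - c v * E v)"
    using wi[OF L'] wi[OF L] by (simp add: set_integral_diff mult.commute)
  also have "\<dots> = (\<integral>v. indicator {w..t} v * ((c' v - c v) * E v) \<partial>lborel)"
    by (simp add: set_lebesgue_integral_def algebra_simps)
  finally have eq: "habit c' t - habit c t = eps * (\<integral>v. indicator {w..t} v * ((c' v - c v) * E v) \<partial>lborel)" .
  have "\<bar>\<integral>v. indicator {w..t} v * ((c' v - c v) * E v) \<partial>lborel\<bar> \<le> (\<integral>v. indicator {0..t} v * \<bar>c' v - c v\<bar> \<partial>lborel)"
  proof (rule integral_abs_bound_integral)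
    show "integrable lborel (\<lambda>v. indicator {w..t} v * ((c' v - c v) * E v))"
      using set_integral_diff(1)[OF wi[OF L'] wi[OF L]]
      by (simp add: set_integrable_def algebra_simps)
    show "integrable lborel (\<lambda>v. indicator {0..t} v * \<bar>c' v - c v\<bar>)"
      using ei by (simp add: set_integrable_def)
    fix v
    show "\<bar>indicator {w..t} v * ((c' v - c v) * E v)\<bar> \<le> indicator {0..t} v * \<bar>c' v - c v\<bar>"
    proof (cases "w \<le> v \<and> v \<le> t")
      case True
      have "E v \<le> 1" "0 < E v" using delay_weight_le_one[of v t 0] True by (auto simp: E_def)
      then have "\<bar>(c' v - c v) * E v\<bar> \<le> \<bar>c' v - c v\<bar>" by (simp add: abs_mult mult_left_le)
      then show ?thesis using True w by (auto simp: indicator_def)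
    qed (auto simp: indicator_def)
  qed
  then show ?thesis using eq pos(4) by (simp add: abs_mult set_lebesgue_integral_def)
qed

lemma control_eq_of_gap_eq:
  assumes L: "L1loc c" and L': "L1loc c'"
    and gap: "AE t in lborel. t \<ge> 0 \<longrightarrow> c t - habit c t = c' t - habit c' t"
  shows "AE t in lborel. t \<ge> 0 \<longrightarrow> c' t = c t"
proof -
  have "AE t in lborel. t \<ge> 0 \<longrightarrow> \<bar>c' t - c t\<bar> = 0"
  proof (rule gronwall_AE_zero[OF _ _ less_imp_le[OF pos(4)]])
    show "set_integrable lborel {0..T} (\<lambda>u. \<bar>c' u - c u\<bar>)" if "0 \<le> T" for T
      by (intro set_integrable_abs set_integral_diff(1) L1loc_set_integrable[OF L' that] L1loc_set_integrable[OF L that])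
    show "AE t in lborel. 0 \<le> t \<longrightarrow> 0 \<le> \<bar>c' t - c t\<bar> \<and> \<bar>c' t - c t\<bar> \<le> eps * (LINT u:{0..t}|lborel. \<bar>c' u - c u\<bar>)"
      using gap
    proof eventually_elim
      case (elim t)
      then show ?case using habit_diff_bound[OF L L', of t] by auto
    qed
  qed
  then show ?thesis by eventually_elim simp
qed

lemma J0_eq:
  "J0 A delta rho eps eta tau gam (x0, x1) c = (if gam < 1 then enn2ereal (pos_util c) else - enn2ereal (neg_util c))"
  unfolding J0_def pos_util_def neg_util_def surplus_def habit_def p_def Let_def snd_conv by (rule refl)

lemma closed_loop_surplus:
  assumes cl: "closed_loop A delta rho eps eta tau gam (x0, x1) X c"
  shows "AE t in lborel. t \<ge> 0 \<longrightarrow> surplus c t = opt_gap t"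
  using closed_loop_gap[OF cl]
proof eventually_elim
  case (elim t) then show ?case using opt_gap_pos[of t] by (auto simp: surplus_def)
qed

lemma closed_loop_pos_util:
  assumes cl: "closed_loop A delta rho eps eta tau gam (x0, x1) X c" and g: "gam < 1"
  shows "pos_util c = ennreal pos_value"
proof -
  have pp: "p > 0" using g by (simp add: p_def)
  have "pos_util c = (\<integral>\<^sup>+t. indicator {0..} t * ennreal (opt_gap t powr p / p * exp (-rho * t)) \<partial>lborel)"
    unfolding pos_util_def
    by (rule nn_integral_cong_AE) (use closed_loop_surplus[OF cl] in \<open>eventually_elim, auto simp: indicator_def\<close>)
  also have "\<dots> = ennreal pos_value"
    using nn_integral_opt_gap_utility[OF pp] by (simp add: pos_value_def)
  finally show ?thesis .
qed

lemma closed_loop_neg_util: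
  assumes cl: "closed_loop A delta rho eps eta tau gam (x0, x1) X c" and g: "gam > 1"
  shows "neg_util c = ennreal neg_value"
proof -
  have g1: "gam - 1 > 0" using g by simp
  have "neg_util c = (\<integral>\<^sup>+t. indicator {0..} t * ennreal (opt_gap t powr p / (gam - 1) * exp (-rho * t)) \<partial>lborel)"
    unfolding neg_util_def
    using closed_loop_surplus[OF cl]
  proof (intro nn_integral_cong_AE, eventually_elim)
    case (elim t) then show ?case using opt_gap_pos[of t] by (auto simp: indicator_def)
  qed
  also have "\<dots> = ennreal neg_value"
    using nn_integral_opt_gap_utility[OF g1] by (simp add: neg_value_def)
  finally show ?thesis .
qed

lemma nu_G0_eq: "nu A delta rho gam * G0 powr (1 - gam) = (a * G0) powr p / p / a"
proof -
  have "(a * G0) powr p / a = a powr (p - 1) * G0 powr p"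
    using a_pos G0_pos by (simp add: powr_mult powr_diff)
  moreover have "p - 1 = - gam" by (simp add: p_def)
  ultimately have e: "(a * G0) powr p / a = a powr (- gam) * G0 powr p" by simp
  have "(a * G0) powr p / p / a = ((a * G0) powr p / a) / p" by simp
  also have "\<dots> = a powr (- gam) * G0 powr p / p" unfolding e ..
  also have "\<dots> = nu A delta rho gam * G0 powr (1 - gam)"
    by (simp add: nu_def a_def[symmetric] p_def)
  finally show ?thesis by simp
qed

lemma pos_value_eq: "pos_value = nu A delta rho gam * G0 powr (1 - gam)"
  by (simp add: nu_G0_eq pos_value_def)

lemma neg_value_eq: "- neg_value = nu A delta rho gam * G0 powr (1 - gam)"
proof -
  have "gam - 1 = - p" by (simp add: p_def)
  then have "neg_value = - ((a * G0) powr p / p / a)" unfolding neg_value_def by simp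
  then show ?thesis by (simp add: nu_G0_eq)
qed

lemma J0_closed_loop:
  assumes cl: "closed_loop A delta rho eps eta tau gam (x0, x1) X c"
  shows "J0 A delta rho eps eta tau gam (x0, x1) c = ereal (nu A delta rho gam * G0 powr (1 - gam))"
proof (cases "gam < 1")
  case True
  have "0 \<le> pos_value" using True a_pos G0_pos by (simp add: pos_value_def p_def)
  then show ?thesis using closed_loop_pos_util[OF cl True] pos_value_eq J0_eq True by simp
next
  case False
  then have g: "gam > 1" using pos by simp
  have "0 \<le> neg_value" using g a_pos G0_pos by (simp add: neg_value_def)
  then show ?thesis using closed_loop_neg_util[OF cl g] neg_value_eq J0_eq False by simp
qed

lemma J0_le_closed_loop:
  assumes cl: "closed_loop A delta rho eps eta tau gam (x0, x1) X c"
    and c': "c' \<in> Cad A delta eps eta tau (x0, x1)"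
  shows "J0 A delta rho eps eta tau gam (x0, x1) c' \<le> J0 A delta rho eps eta tau gam (x0, x1) c"
proof (cases "gam < 1")
  case True
  have "pos_util c' \<le> pos_util c"
    using pos_util_le_value(1)[OF True c'] closed_loop_pos_util[OF cl True] by simp
  then show ?thesis using True J0_eq by (simp add: less_eq_ennreal.rep_eq[symmetric])
next
  case False
  then have g: "gam > 1" using pos by simp
  have "neg_util c \<le> neg_util c'"
    using neg_util_ge_value(1)[OF g c'] closed_loop_neg_util[OF cl g] by simp
  then have "enn2ereal (neg_util c) \<le> enn2ereal (neg_util c')" by (simp add: less_eq_ennreal.rep_eq[symmetric])
  then show ?thesis using False J0_eq by simp
qed

lemma optimal_surplus_unique:
  assumes cl: "closed_loop A delta rho eps eta tau gam (x0, x1) X c"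
    and c': "c' \<in> Cad A delta eps eta tau (x0, x1)"
    and eq: "J0 A delta rho eps eta tau gam (x0, x1) c' = J0 A delta rho eps eta tau gam (x0, x1) c"
  shows "AE t in lborel. t \<ge> 0 \<longrightarrow> surplus c' t = opt_gap t"
proof (cases "gam < 1")
  case True
  have "enn2ereal (pos_util c') = enn2ereal (pos_util c)" using eq True J0_eq by simp
  then have "pos_util c' = ennreal pos_value" using closed_loop_pos_util[OF cl True] by (simp add: enn2ereal_inject)
  then show ?thesis by (rule pos_util_le_value(2)[OF True c'])
next
  case False
  then have g: "gam > 1" using pos by simp
  have "enn2ereal (neg_util c') = enn2ereal (neg_util c)" using eq False J0_eq by simp
  then have "neg_util c' = ennreal neg_value" using closed_loop_neg_util[OF cl g] by (simp add: enn2ereal_inject)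
  then show ?thesis by (rule neg_util_ge_value(2)[OF g c'])
qed

lemma optimal_control_unique:
  assumes cl: "closed_loop A delta rho eps eta tau gam (x0, x1) X c"
    and c': "c' \<in> Cad A delta eps eta tau (x0, x1)"
    and eq: "J0 A delta rho eps eta tau gam (x0, x1) c' = J0 A delta rho eps eta tau gam (x0, x1) c"
  shows "AE t in lborel. t \<ge> 0 \<longrightarrow> c' t = c t"
proof (rule control_eq_of_gap_eq[OF admissibleD(1)[OF closed_loop_admissible[OF cl]] admissibleD(1)[OF c']])
  show "AE t in lborel. t \<ge> 0 \<longrightarrow> c t - habit c t = c' t - habit c' t"
    using optimal_surplus_unique[OF cl c' eq] closed_loop_gap[OF cl] admissibleD(3)[OF c']
    by eventually_elim (auto simp: surplus_def)
qed

lemma V0_closed_loop: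
  assumes cl: "closed_loop A delta rho eps eta tau gam (x0, x1) X c"
  shows "V0 A delta rho eps eta tau gam (x0, x1) = J0 A delta rho eps eta tau gam (x0, x1) c"
  unfolding V0_def
proof (rule antisym)
  show "Sup (J0 A delta rho eps eta tau gam (x0, x1) ` Cad A delta eps eta tau (x0, x1))
      \<le> J0 A delta rho eps eta tau gam (x0, x1) c"
    by (rule Sup_least) (use J0_le_closed_loop[OF cl] in auto)
  show "J0 A delta rho eps eta tau gam (x0, x1) c
      \<le> Sup (J0 A delta rho eps eta tau gam (x0, x1) ` Cad A delta eps eta tau (x0, x1))"
    by (rule Sup_upper) (use closed_loop_admissible[OF cl] in auto)
qed

end

lemma habit_problem_of_Iset:
  assumes "A > 0" "delta > 0" "rho > 0" "eps > 0" "eta > 0" "tau > 0" "gam > 0" "gam \<noteq> 1"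
    and "eps \<le> eta" "0 < A - delta" "rho > (A - delta) * (1 - gam)"
    and I: "(x0, x1) \<in> Iset A delta eps eta tau"
  shows "habit_problem A delta rho eps eta tau gam x0 x1"
proof
  have W: "W12 tau x1" and x1: "x1 (-tau) = 0" "\<forall>s\<in>{-tau<..0}. x1 s > 0"
    using I by (auto simp: Iset_def)
  show "continuous_on {-tau..0} x1" by (rule W12_continuous_on[OF W \<open>tau > 0\<close>])
  show "x1 s \<ge> 0" if "s \<in> {-tau..0}" for s
    using x1 that by (cases "s = -tau") (auto intro: less_imp_le)
  show "Gfun A delta eps eta tau (x0, x1) > 0" using I by (simp add: Iset_def)
qed (use assms in auto)

theorem mainTheorem10:
  fixes A delta rho eps eta tau gam :: real
    and q :: "real \<times> (real \<Rightarrow> real)"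
    and X :: "real \<Rightarrow> real \<times> (real \<Rightarrow> real)"
    and c :: "real \<Rightarrow> real"
  assumes "A > 0" "delta > 0" "rho > 0" "eps > 0" "eta > 0" "tau > 0" "gam > 0" "gam \<noteq> 1"
    and "lambda0 eps eta tau < eps - eta" "eps - eta \<le> 0" "0 < A - delta"
    and "rho > (A - delta) * (1 - gam)"
    and "q \<in> Iset A delta eps eta tau"
    and "closed_loop A delta rho eps eta tau gam q X c"
  shows "c \<in> Cad A delta eps eta tau q
    \<and> J0 A delta rho eps eta tau gam q c = V0 A delta rho eps eta tau gam q
    \<and> V0 A delta rho eps eta tau gam q
        = ereal (nu A delta rho gam * Gfun A delta eps eta tau q powr (1 - gam))
    \<and> (\<forall>c'\<in>Cad A delta eps eta tau q.
         J0 A delta rho eps eta tau gam q c' = V0 A delta rho eps eta tau gam q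
         \<longrightarrow> (AE t in lborel. t \<ge> 0 \<longrightarrow> c' t = c t))"
proof -
  obtain x0 x1 where q: "q = (x0, x1)" by (cases q)
  interpret habit_problem A delta rho eps eta tau gam x0 x1
    by (rule habit_problem_of_Iset) (use assms q in auto)
  have cl: "closed_loop A delta rho eps eta tau gam (x0, x1) X c" using assms(14) q by simp
  show ?thesis
    using closed_loop_admissible[OF cl] V0_closed_loop[OF cl] J0_closed_loop[OF cl]
      optimal_control_unique[OF cl] q
    by (simp add: G0_def)
qed

end
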